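(* Let $m,n\ge 3$ and let $K=(U_m(a,b,c))^R$ and $L=(U_n(b,a,c))^R$. If $(m,n)\neq(4,4)$, then the state complexities of $K\cup L$, $K\cap L$ and $K\setminus L$ are each $(2^m-1)(2^n-1)+1$, and the state complexity of $K\oplus L$ is $2^{m+n-1}$. If $m=n=4$, the state complexities of $K\cup L$, $K\cap L$ and $K\setminus L$ are each $202$ and that of $K\oplus L$ is $116$.
   Context: The state complexity of a regular language is the number of states of its minimal complete DFA. For $n\ge 3$, $\mathcal{U}_n(a,b,c)$ is the DFA over $\{a,b,c\}$ with states $\{0,\dots,n-1\}$, initial state $0$, final states $\{n-1\}$, where $a$ maps $i\mapsto i+1\pmod n$, $b$ swaps $0$ and $1$ fixing other states, and $c$ maps $n-1$ to $0$ fixing other states; $U_n(a,b,c)$ is its language. $\mathcal{U}_n(b,a,c)$ and $U_n(b,a,c)$ are obtained by interchanging the roles of letters $a$ and $b$: in $\mathcal{U}_n(b,a,c)$, $b$ maps $i\mapsto i+1\pmod n$, $a$ swaps $0$ and $1$, and $c$ maps $n-1$ to $0$ (same states, initial state $0$, final states $\{n-1\}$). $L^R$ is the reversal of $L$; $\setminus$ is set difference, $\oplus$ is symmetric difference. *)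

theory Defs
  imports Main
begin

datatype letter = La | Lb | Lc

text \<open>Complete DFAs over the alphabet, with states drawn from nat
  (any finite state set can be relabelled by naturals).\<close>
definition is_dfa :: "nat set \<Rightarrow> nat \<Rightarrow> (nat \<Rightarrow> letter \<Rightarrow> nat) \<Rightarrow> nat set \<Rightarrow> bool" where
  "is_dfa Q q0 \<delta> F \<longleftrightarrow> finite Q \<and> q0 \<in> Q \<and> (\<forall>q\<in>Q. \<forall>x. \<delta> q x \<in> Q) \<and> F \<subseteq> Q"

definition dfa_lang :: "nat \<Rightarrow> (nat \<Rightarrow> letter \<Rightarrow> nat) \<Rightarrow> nat set \<Rightarrow> letter list set" where
  "dfa_lang q0 \<delta> F = {w. foldl \<delta> q0 w \<in> F}"

definition sc :: "letter list set \<Rightarrow> nat" where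
  "sc L = (LEAST k. \<exists>Q q0 \<delta> F. is_dfa Q q0 \<delta> F \<and> card Q = k \<and> dfa_lang q0 \<delta> F = L)"

definition U_delta :: "nat \<Rightarrow> letter \<Rightarrow> letter \<Rightarrow> letter \<Rightarrow> nat \<Rightarrow> letter \<Rightarrow> nat" where
  "U_delta n a b c q x =
     (if x = a then (q + 1) mod n
      else if x = b then (if q = 0 then 1 else if q = 1 then 0 else q)
      else if x = c then (if q = n - 1 then 0 else q)
      else q)"

definition U :: "nat \<Rightarrow> letter \<Rightarrow> letter \<Rightarrow> letter \<Rightarrow> letter list set" where
  "U n a b c = dfa_lang 0 (U_delta n a b c) {n - 1}"

definition reversal :: "letter list set \<Rightarrow> letter list set" where
  "reversal L = rev ` L"

definition symdiff :: "letter list set \<Rightarrow> letter list set \<Rightarrow> letter list set" where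
  "symdiff K L = (K - L) \<union> (L - K)"

end

theory Submission
  imports Defs "HOL-Combinatorics.Transposition"
begin

(* Write K = U_m(a,b,c)^R and L = U_n(b,a,c)^R and let \<circ> be one of the
   Boolean operations.  By Myhill-Nerode, sc(K \<circ> L) is the number of distinct left quotients
   of K \<circ> L.  The quotient of K by a word u is determined by the set S_u of states of U_m
   from which rev u leads to the final state (a state of the subset automaton of K), and
   similarly T_u for L; so the quotient of K \<circ> L by u is determined by the "pair set"
   {(p,q). (p \<in> S_u) \<circ> (q \<in> T_u)}.  Since every pair of states (p,q) is reachable
   simultaneously in both automata, distinct pair sets give distinct quotients, and
   sc(K \<circ> L) is the number of pair sets arising from the reachable pairs (S_u, T_u).

   For (m,n) \<noteq> (4,4) we show that all pairs (S,T) are reachable.  The key tool is a word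
   acting as a prescribed permutation on U_m while fixing every state of U_n; all 3-cycles
   (i, i+2, i+1) are of this form, hence any S can be replaced by any S' of the same size,
   and the letter c changes the sizes by at most one.  The four state complexities are then
   elementary counts of sets of "rectangles".  For m = n = 4 exactly 24 pairs (S,T) with
   |S| = |T| = 2 are unreachable; this case is settled by a finite computation. *)

section \<open>State complexity via left quotients\<close>

definition lquot :: "letter list \<Rightarrow> letter list set \<Rightarrow> letter list set" where
  "lquot u L = {v. u @ v \<in> L}"

lemma lquot_append: "lquot (u @ v) L = lquot v (lquot u L)"
  by (auto simp: lquot_def)

lemma dfa_foldl_closed: "is_dfa Q q0 \<delta> F \<Longrightarrow> q \<in> Q \<Longrightarrow> foldl \<delta> q w \<in> Q"
  by (induction w arbitrary: q) (auto simp: is_dfa_def)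

lemma card_lquots_le:
  assumes "is_dfa Q q0 \<delta> F" "dfa_lang q0 \<delta> F = L"
  shows "card (range (\<lambda>u. lquot u L)) \<le> card Q"
proof -
  have "range (\<lambda>u. lquot u L) \<subseteq> (\<lambda>q. {v. foldl \<delta> q v \<in> F}) ` Q"
  proof
    fix X assume "X \<in> range (\<lambda>u. lquot u L)"
    then obtain u where X: "X = lquot u L" by auto
    have "X = {v. foldl \<delta> (foldl \<delta> q0 u) v \<in> F}"
      using assms(2) by (auto simp: X lquot_def dfa_lang_def)
    moreover have "foldl \<delta> q0 u \<in> Q" using assms(1) dfa_foldl_closed is_dfa_def by blast
    ultimately show "X \<in> (\<lambda>q. {v. foldl \<delta> q v \<in> F}) ` Q" by blast
  qed
  moreover have "finite Q" using assms(1) is_dfa_def by blast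
  ultimately show ?thesis
    by (meson card_image_le card_mono finite_imageI le_trans)
qed

lemma quotient_dfa_exists:
  assumes fin: "finite (range (\<lambda>u. lquot u L))"
  shows "\<exists>Q q0 \<delta> F. is_dfa Q q0 \<delta> F \<and> card Q = card (range (\<lambda>u. lquot u L)) \<and> dfa_lang q0 \<delta> F = L"
proof -
  define D where "D = range (\<lambda>u. lquot u L)"
  define N where "N = card D"
  obtain h where h: "bij_betw h {0..<N} D"
    using ex_bij_betw_nat_finite[OF fin] unfolding N_def D_def by blast
  define g where "g = inv_into {0..<N} h"
  have hg: "\<And>X. X \<in> D \<Longrightarrow> h (g X) = X" "\<And>X. X \<in> D \<Longrightarrow> g X \<in> {0..<N}"
    using h unfolding g_def
    by (auto simp: bij_betw_def f_inv_into_f inv_into_into)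
  define \<delta> where "\<delta> q x = g (lquot [x] (h q))" for q x
  define F where "F = {q \<in> {0..<N}. [] \<in> h q}"
  define q0 where "q0 = g L"
  have "lquot [] L = L" by (simp add: lquot_def)
  then have LD: "L \<in> D" unfolding D_def by (metis rangeI)
  have DD: "X \<in> D \<Longrightarrow> lquot [x] X \<in> D" for X x
    unfolding D_def by (auto simp: lquot_append[symmetric])
  have run: "h (foldl \<delta> q0 w) = lquot w L \<and> foldl \<delta> q0 w \<in> {0..<N}" for w
  proof (induction w rule: rev_induct)
    case Nil
    then show ?case using hg LD by (simp add: q0_def lquot_def)
  next
    case (snoc x w)
    have "lquot (w @ [x]) L \<in> D" unfolding D_def by blast
    then show ?case using snoc hg by (simp add: \<delta>_def lquot_append)
  qed
  have hD: "h q \<in> D" if "q \<in> {0..<N}" for q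
    using h that by (auto simp: bij_betw_def)
  have "is_dfa {0..<N} q0 \<delta> F"
    unfolding is_dfa_def
  proof (intro conjI ballI allI)
    show "q0 \<in> {0..<N}" using hg(2)[OF LD] by (simp add: q0_def)
    show "\<delta> q x \<in> {0..<N}" if "q \<in> {0..<N}" for q x
      using hg(2)[OF DD[OF hD[OF that]]] by (simp add: \<delta>_def)
  qed (auto simp: F_def)
  moreover have "dfa_lang q0 \<delta> F = L"
    using run by (auto simp: dfa_lang_def F_def lquot_def)
  ultimately show ?thesis unfolding N_def D_def by (metis card_atLeastLessThan diff_zero)
qed

theorem sc_eq_card_lquots:
  assumes "finite (range (\<lambda>u. lquot u L))"
  shows "sc L = card (range (\<lambda>u. lquot u L))"
  unfolding sc_def
proof (rule Least_equality)
  show "\<exists>Q q0 \<delta> F. is_dfa Q q0 \<delta> F \<and> card Q = card (range (\<lambda>u. lquot u L)) \<and> dfa_lang q0 \<delta> F = L"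
    using quotient_dfa_exists[OF assms] .
  show "\<And>y. \<exists>Q q0 \<delta> F. is_dfa Q q0 \<delta> F \<and> card Q = y \<and> dfa_lang q0 \<delta> F = L \<Longrightarrow>
         card (range (\<lambda>u. lquot u L)) \<le> y"
    using card_lquots_le by blast
qed

section \<open>The automata \<open>\<U>_k(a,b,c)\<close>\<close>

definition run :: "nat \<Rightarrow> letter \<Rightarrow> letter \<Rightarrow> letter \<Rightarrow> letter list \<Rightarrow> nat \<Rightarrow> nat" where
  "run k a b c v q = foldl (U_delta k a b c) q v"

abbreviation swap01 :: "nat \<Rightarrow> nat" where
  "swap01 \<equiv> transpose 0 1"

lemma run_Nil [simp]: "run k a b c [] q = q"
  by (simp add: run_def)

lemma run_append: "run k a b c (v @ w) q = run k a b c w (run k a b c v q)"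
  by (simp add: run_def)

lemma run_Cons: "run k a b c (x # v) q = run k a b c v (U_delta k a b c q x)"
  by (simp add: run_def)

lemma U_delta_first [simp]: "U_delta k a b c q a = (q + 1) mod k"
  by (simp add: U_delta_def)

lemma U_delta_second [simp]: "b \<noteq> a \<Longrightarrow> U_delta k a b c q b = swap01 q"
  by (simp add: U_delta_def transpose_def)

lemma U_delta_third [simp]:
  "c \<noteq> a \<Longrightarrow> c \<noteq> b \<Longrightarrow> U_delta k a b c q c = (if q = k - 1 then 0 else q)"
  by (simp add: U_delta_def)

lemma swap01_lt: "k \<ge> 2 \<Longrightarrow> q < k \<Longrightarrow> swap01 q < k"
  by (simp add: transpose_def)

lemma U_delta_lt: "k \<ge> 2 \<Longrightarrow> q < k \<Longrightarrow> U_delta k a b c q x < k"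
  by (auto simp: U_delta_def)

lemma run_lt: "k \<ge> 2 \<Longrightarrow> q < k \<Longrightarrow> run k a b c v q < k"
  by (induction v arbitrary: q) (auto simp: run_Cons U_delta_lt)

lemma run_replicate_first: "q < k \<Longrightarrow> run k a b c (replicate j a) q = (q + j) mod k"
proof (induction j arbitrary: q)
  case 0 then show ?case by simp
next
  case (Suc j)
  have "run k a b c (replicate (Suc j) a) q = run k a b c (replicate j a) ((q + 1) mod k)"
    by (simp add: run_Cons)
  also have "\<dots> = ((q + 1) mod k + j) mod k" using Suc by simp
  also have "\<dots> = (q + Suc j) mod k" by (simp add: mod_add_left_eq)
  finally show ?case .
qed

lemma run_replicate_second:
  "b \<noteq> a \<Longrightarrow> run k a b c (replicate j b) q = (if even j then q else swap01 q)"
  by (induction j arbitrary: q) (auto simp: run_Cons)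

section \<open>Reduction to pairs of state sets\<close>

text \<open>\<open>rstate k a b c u\<close> is the set of states of \<open>\<U>_k(a,b,c)\<close> from which \<open>rev u\<close> is
  accepted, i.e.\ the state reached by \<open>u\<close> in the subset automaton of the reversal.\<close>
definition rstate :: "nat \<Rightarrow> letter \<Rightarrow> letter \<Rightarrow> letter \<Rightarrow> letter list \<Rightarrow> nat set" where
  "rstate k a b c u = {q. q < k \<and> run k a b c (rev u) q = k - 1}"

definition reach_pairs :: "nat \<Rightarrow> nat \<Rightarrow> letter \<Rightarrow> letter \<Rightarrow> letter \<Rightarrow> (nat set \<times> nat set) set" where
  "reach_pairs m n a b c = range (\<lambda>u. (rstate m a b c u, rstate n b a c u))"

definition pair_set ::
  "nat \<Rightarrow> nat \<Rightarrow> (bool \<Rightarrow> bool \<Rightarrow> bool) \<Rightarrow> nat set \<times> nat set \<Rightarrow> (nat \<times> nat) set" where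
  "pair_set m n op ST = {(p, q). p < m \<and> q < n \<and> op (p \<in> fst ST) (q \<in> snd ST)}"

definition pairs_connected :: "nat \<Rightarrow> nat \<Rightarrow> letter \<Rightarrow> letter \<Rightarrow> letter \<Rightarrow> bool" where
  "pairs_connected m n a b c \<longleftrightarrow> (\<forall>p<m. \<forall>q<n. \<exists>w. run m a b c w 0 = p \<and> run n b a c w 0 = q)"

lemma in_reversal: "w \<in> reversal L \<longleftrightarrow> rev w \<in> L"
  unfolding reversal_def by (metis image_iff rev_rev_ident)

lemma in_reversal_U: "w \<in> reversal (U k a b c) \<longleftrightarrow> run k a b c (rev w) 0 = k - 1"
  by (simp add: in_reversal U_def dfa_lang_def run_def)

lemma lquot_bool_comb:
  assumes "m \<ge> 2" "n \<ge> 2"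
  shows "lquot u {w. op (w \<in> reversal (U m a b c)) (w \<in> reversal (U n b a c))}
    = {v. (run m a b c (rev v) 0, run n b a c (rev v) 0)
            \<in> pair_set m n op (rstate m a b c u, rstate n b a c u)}"
proof -
  have "run m a b c (rev v) 0 < m" "run n b a c (rev v) 0 < n" for v
    using assms run_lt by auto
  then show ?thesis
    by (auto simp: lquot_def in_reversal_U run_append pair_set_def rstate_def)
qed

theorem sc_bool_comb:
  assumes "m \<ge> 2" "n \<ge> 2" "pairs_connected m n a b c"
  shows "sc {w. op (w \<in> reversal (U m a b c)) (w \<in> reversal (U n b a c))}
     = card (pair_set m n op ` reach_pairs m n a b c)"
proof -
  let ?L = "{w. op (w \<in> reversal (U m a b c)) (w \<in> reversal (U n b a c))}"
  define lang where "lang X = {v. (run m a b c (rev v) 0, run n b a c (rev v) 0) \<in> X}" for X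
  have quots: "range (\<lambda>u. lquot u ?L) = lang ` (pair_set m n op ` reach_pairs m n a b c)"
    unfolding reach_pairs_def lang_def using lquot_bool_comb[OF assms(1,2)]
    by (auto simp: image_image)
  have sub: "pair_set m n op ` reach_pairs m n a b c \<subseteq> Pow ({..<m} \<times> {..<n})"
    by (auto simp: pair_set_def)
  have inj: "inj_on lang (Pow ({..<m} \<times> {..<n}))"
  proof (rule inj_onI)
    fix X Y assume X: "X \<in> Pow ({..<m} \<times> {..<n})" and Y: "Y \<in> Pow ({..<m} \<times> {..<n})"
      and eq: "lang X = lang Y"
    show "X = Y"
    proof (rule set_eqI)
      fix z show "z \<in> X \<longleftrightarrow> z \<in> Y"
      proof (cases "fst z < m \<and> snd z < n")
        case True
        then obtain w where w: "run m a b c w 0 = fst z" "run n b a c w 0 = snd z"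
          using assms(3) unfolding pairs_connected_def by blast
        have "rev w \<in> lang X \<longleftrightarrow> rev w \<in> lang Y" using eq by simp
        then show ?thesis using w by (simp add: lang_def)
      next
        case False then show ?thesis using X Y by auto
      qed
    qed
  qed
  have "finite (pair_set m n op ` reach_pairs m n a b c)"
    using sub by (meson finite_Pow_iff finite_SigmaI finite_lessThan finite_subset)
  then have "sc ?L = card (range (\<lambda>u. lquot u ?L))"
    using quots by (simp add: sc_eq_card_lquots)
  also have "\<dots> = card (pair_set m n op ` reach_pairs m n a b c)"
    unfolding quots by (rule card_image) (meson inj inj_on_subset sub)
  finally show ?thesis .
qed

section \<open>Words acting on one automaton only\<close>

text \<open>Such words move the first component of
  a reachable pair \<open>(S, T)\<close> without touching the second.\<close>
definition realizable :: "nat \<Rightarrow> nat \<Rightarrow> letter \<Rightarrow> letter \<Rightarrow> letter \<Rightarrow> (nat \<Rightarrow> nat) \<Rightarrow> bool" where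
  "realizable m n a b c \<sigma> \<longleftrightarrow>
     (\<exists>v. (\<forall>q<n. run n b a c v q = q) \<and> (\<forall>q<m. run m a b c v q = \<sigma> q))"

definition distinct3 :: "letter \<Rightarrow> letter \<Rightarrow> letter \<Rightarrow> bool" where
  "distinct3 a b c \<longleftrightarrow> a \<noteq> b \<and> a \<noteq> c \<and> b \<noteq> c"

lemma distinct3_swap: "distinct3 a b c \<Longrightarrow> distinct3 b a c"
  by (auto simp: distinct3_def)

lemma realizable_cong:
  "realizable m n a b c \<sigma> \<Longrightarrow> (\<And>q. q < m \<Longrightarrow> \<sigma> q = \<tau> q) \<Longrightarrow> realizable m n a b c \<tau>"
  unfolding realizable_def by metis

lemma realizable_lt: "m \<ge> 2 \<Longrightarrow> realizable m n a b c \<sigma> \<Longrightarrow> q < m \<Longrightarrow> \<sigma> q < m"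
  unfolding realizable_def using run_lt by metis

lemma realizable_id: "realizable m n a b c (\<lambda>q. q)"
  unfolding realizable_def by (rule exI[of _ "[]"]) simp

lemma realizable_comp:
  assumes "m \<ge> 2" "realizable m n a b c \<sigma>" "realizable m n a b c \<tau>"
  shows "realizable m n a b c (\<lambda>q. \<tau> (\<sigma> q))"
proof -
  obtain v where v: "\<forall>q<n. run n b a c v q = q" "\<forall>q<m. run m a b c v q = \<sigma> q"
    using assms(2) unfolding realizable_def by blast
  obtain w where w: "\<forall>q<n. run n b a c w q = q" "\<forall>q<m. run m a b c w q = \<tau> q"
    using assms(3) unfolding realizable_def by blast
  show ?thesis unfolding realizable_def
    using v w realizable_lt[OF assms(1,2)] by (intro exI[of _ "v @ w"]) (simp add: run_append)
qed

lemma realizable_funpow: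
  assumes "m \<ge> 2" "realizable m n a b c \<sigma>"
  shows "realizable m n a b c (\<sigma> ^^ j)"
proof (induction j)
  case 0 then show ?case using realizable_id by (simp add: id_def)
next
  case (Suc j)
  have "realizable m n a b c (\<lambda>q. \<sigma> ((\<sigma> ^^ j) q))"
    using realizable_comp[OF assms(1) Suc assms(2)] .
  then show ?case by (simp add: comp_def)
qed

text \<open>The word \<open>aa\<close> rotates \<open>\<U>_m(a,b,c)\<close> by two and fixes \<open>\<U>_n(b,a,c)\<close>, where \<open>a\<close> swaps.\<close>
lemma realizable_rot2:
  assumes "distinct3 a b c"
  shows "realizable m n a b c (\<lambda>q. (q + 2) mod m)"
proof -
  have "a \<noteq> b" using assms by (simp add: distinct3_def)
  then show ?thesis unfolding realizable_def
    by (intro exI[of _ "[a, a]"]) (simp add: run_Cons mod_Suc_eq)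
qed

text \<open>Conjugating a realizable map by \<open>a\<close> (rotation on the first automaton, an involution on
  the second) gives a realizable map: use the word \<open>a v a\<^sup>2\<^sup>m\<^sup>-\<^sup>1\<close>.\<close>
lemma realizable_conj_first:
  assumes "distinct3 a b c" "m \<ge> 2" "n \<ge> 2" "realizable m n a b c \<sigma>"
  shows "realizable m n a b c (\<lambda>q. (\<sigma> ((q + 1) mod m) + (2 * m - 1)) mod m)"
proof -
  have ab: "b \<noteq> a" using assms by (auto simp: distinct3_def)
  obtain v where v: "\<forall>q<n. run n b a c v q = q" "\<forall>q<m. run m a b c v q = \<sigma> q"
    using assms(4) unfolding realizable_def by blast
  have lt: "q < m \<Longrightarrow> \<sigma> q < m" for q using realizable_lt[OF assms(2,4)] .
  show ?thesis unfolding realizable_def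
  proof (rule exI[of _ "[a] @ v @ replicate (2 * m - 1) a"], intro conjI allI impI)
    fix q assume q: "q < n"
    have "swap01 q < n" using swap01_lt assms(3) q by blast
    moreover have "odd (2 * m - 1)" using assms(2) by simp
    ultimately show "run n b a c ([a] @ v @ replicate (2 * m - 1) a) q = q"
      using ab v(1) by (simp add: run_append run_Cons run_replicate_second)
  next
    fix q assume q: "q < m"
    have "(q + 1) mod m < m" using assms(2) by simp
    then show "run m a b c ([a] @ v @ replicate (2 * m - 1) a) q
        = (\<sigma> ((q + 1) mod m) + (2 * m - 1)) mod m"
      using v(2) lt by (simp add: run_append run_Cons run_replicate_first)
  qed
qed

text \<open>Dually, conjugating by \<open>b\<close> (swap of \<open>0, 1\<close> on the first automaton, rotation on the
  second): use the word \<open>b v b\<^sup>2\<^sup>n\<^sup>-\<^sup>1\<close>.\<close>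
lemma realizable_conj_second:
  assumes "distinct3 a b c" "m \<ge> 2" "n \<ge> 2" "realizable m n a b c \<sigma>"
  shows "realizable m n a b c (\<lambda>q. swap01 (\<sigma> (swap01 q)))"
proof -
  have ab: "b \<noteq> a" using assms by (auto simp: distinct3_def)
  obtain v where v: "\<forall>q<n. run n b a c v q = q" "\<forall>q<m. run m a b c v q = \<sigma> q"
    using assms(4) unfolding realizable_def by blast
  show ?thesis unfolding realizable_def
  proof (rule exI[of _ "[b] @ v @ replicate (2 * n - 1) b"], intro conjI allI impI)
    fix q assume q: "q < n"
    have 1: "(q + 1) mod n < n" using assms(3) by simp
    have "((q + 1) mod n + (2 * n - 1)) mod n = q"
    proof -
      have "((q + 1) mod n + (2 * n - 1)) mod n = (q + 1 + (2 * n - 1)) mod n"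
        by (simp add: mod_add_left_eq)
      also have "q + 1 + (2 * n - 1) = q + n * 2" using assms(3) by simp
      also have "(q + n * 2) mod n = q" using q by simp
      finally show ?thesis .
    qed
    then show "run n b a c ([b] @ v @ replicate (2 * n - 1) b) q = q"
      using ab v(1) 1 by (simp add: run_append run_Cons run_replicate_first)
  next
    fix q assume q: "q < m"
    have "swap01 q < m" using swap01_lt assms(2) q by blast
    moreover have "odd (2 * n - 1)" using assms(3) by simp
    ultimately show "run m a b c ([b] @ v @ replicate (2 * n - 1) b) q = swap01 (\<sigma> (swap01 q))"
      using v(2) ab by (simp add: run_append run_Cons run_replicate_second)
  qed
qed

text \<open>For odd \<open>n\<close> the word \<open>b\<^sup>n\<close> realizes the swap of \<open>0\<close> and \<open>1\<close>.\<close>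
lemma realizable_swap01:
  assumes "distinct3 a b c" "odd n"
  shows "realizable m n a b c swap01"
proof -
  have "b \<noteq> a" using assms by (auto simp: distinct3_def)
  then show ?thesis unfolding realizable_def
    using assms(2) by (intro exI[of _ "replicate n b"]) (simp add: run_replicate_first run_replicate_second)
qed

section \<open>Realizable 3-cycles\<close>

lemma mod_add_diff:
  "(x::nat) < m \<Longrightarrow> k \<le> m \<Longrightarrow> (x + (m - k)) mod m = (if k \<le> x then x - k else x + m - k)"
proof -
  assume x: "x < m" and k: "k \<le> m"
  show ?thesis
  proof (cases "k \<le> x")
    case True
    then have "x + (m - k) = (x - k) + m" using k by simp
    then have "(x + (m - k)) mod m = (x - k) mod m" by (metis mod_add_self2)
    then show ?thesis using True x by simp
  qed (use x k in simp)
qed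

text \<open>Adding \<open>2m - 1\<close> is the predecessor modulo \<open>m\<close>; it undoes one letter \<open>a\<close>.\<close>
lemma mod_pred: "(x::nat) < m \<Longrightarrow> (x + (2 * m - 1)) mod m = (if x = 0 then m - 1 else x - 1)"
proof -
  assume x: "x < m"
  have "x + (2 * m - 1) = (x + (m - 1)) + m" using x by simp
  then have "(x + (2 * m - 1)) mod m = (x + (m - 1)) mod m" by (metis mod_add_self2)
  then show ?thesis using mod_add_diff[OF x, of 1] x by auto
qed

definition succ_mod :: "nat \<Rightarrow> nat \<Rightarrow> nat" where
  "succ_mod m q = (q + 1) mod m"

lemma succ_mod_lt: "0 < m \<Longrightarrow> succ_mod m q < m"
  by (simp add: succ_mod_def)

lemma succ_mod_eq: "(q::nat) < m \<Longrightarrow> succ_mod m q = (if q = m - 1 then 0 else q + 1)"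
  by (auto simp: succ_mod_def mod_if)

lemma mod_pred_succ_mod: "q < m \<Longrightarrow> (succ_mod m q + (2 * m - 1)) mod m = q"
proof -
  assume q: "q < m"
  then have "succ_mod m q < m" using succ_mod_lt[of m q] by simp
  then show ?thesis using mod_pred[of "succ_mod m q" m] q by (simp add: succ_mod_eq)
qed

lemma succ_mod_inj: "x < m \<Longrightarrow> y < m \<Longrightarrow> succ_mod m x = succ_mod m y \<longleftrightarrow> x = y"
  by (metis mod_pred_succ_mod)

definition rot3 :: "nat \<Rightarrow> nat \<Rightarrow> nat \<Rightarrow> nat" where
  "rot3 m i q = (if q = i then succ_mod m (succ_mod m i) else if q = succ_mod m i then i
     else if q = succ_mod m (succ_mod m i) then succ_mod m i else q)"

lemma rot3_conj:
  assumes "m \<ge> 3" "i < m" "q < m"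
  shows "(rot3 m (succ_mod m i) ((q + 1) mod m) + (2 * m - 1)) mod m = rot3 m i q"
proof -
  have p: "0 < m" using assms by simp
  have "succ_mod m i < m" "succ_mod m (succ_mod m i) < m"
    "succ_mod m (succ_mod m (succ_mod m i)) < m"
    using succ_mod_lt[OF p] by auto
  moreover have "(q + 1) mod m = succ_mod m q" by (simp add: succ_mod_def)
  ultimately show ?thesis
    unfolding rot3_def using assms succ_mod_inj[OF assms(3)] mod_pred_succ_mod by auto
qed

lemma realizable_rot3_from_top:
  assumes "distinct3 a b c" "m \<ge> 3" "n \<ge> 2" "realizable m n a b c (rot3 m (m - 1))" "i < m"
  shows "realizable m n a b c (rot3 m i)"
proof -
  have "d < m \<Longrightarrow> realizable m n a b c (rot3 m (m - 1 - d))" for d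
  proof (induction d)
    case 0 then show ?case using assms(4) by simp
  next
    case (Suc d)
    define i where "i = m - 1 - Suc d"
    have i: "i < m" "succ_mod m i = m - 1 - d" using Suc.prems by (auto simp: i_def succ_mod_eq)
    have "realizable m n a b c
        (\<lambda>q. (rot3 m (succ_mod m i) ((q + 1) mod m) + (2 * m - 1)) mod m)"
      using realizable_conj_first[OF assms(1) _ assms(3)] Suc i assms(2) by simp
    then show ?case unfolding i_def[symmetric]
      using rot3_conj[OF assms(2) i(1)] by (rule realizable_cong)
  qed
  moreover have "m - 1 - (m - 1 - i) = i" "m - 1 - i < m" using assms(2,5) by auto
  ultimately show ?thesis by metis
qed

text \<open>For \<open>m = 3\<close> the rotation by two is itself the required 3-cycle.\<close>
lemma realizable_rot3_top_3:
  assumes "distinct3 a b c"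
  shows "realizable 3 n a b c (rot3 3 2)"
proof (rule realizable_cong[OF realizable_rot2[OF assms]])
  fix q :: nat assume "q < 3"
  then consider "q = 0" | "q = 1" | "q = 2" by linarith
  then show "(q + 2) mod 3 = rot3 3 2 q" by cases (simp_all add: rot3_def succ_mod_def)
qed

text \<open>For \<open>m = 4\<close> and odd \<open>n\<close>, combine the realizable swap with its conjugate by \<open>a\<close>.\<close>
lemma realizable_rot3_top_4_odd:
  assumes "distinct3 a b c" "odd n" "n \<ge> 3"
  shows "realizable 4 n a b c (rot3 4 3)"
proof -
  have s: "realizable 4 n a b c swap01" using realizable_swap01[OF assms(1,2)] .
  have x: "realizable 4 n a b c (\<lambda>q. (swap01 ((q + 1) mod 4) + (2 * 4 - 1)) mod 4)"
    using realizable_conj_first[OF assms(1) _ _ s] assms by simp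
  have "realizable 4 n a b c (\<lambda>q. swap01 ((swap01 ((q + 1) mod 4) + (2 * 4 - 1)) mod 4))"
    using realizable_comp[OF _ x s] by simp
  then show ?thesis
  proof (rule realizable_cong)
    fix q :: nat assume "q < 4"
    then consider "q = 0" | "q = 1" | "q = 2" | "q = 3" by linarith
    then show "swap01 ((swap01 ((q + 1) mod 4) + (2 * 4 - 1)) mod 4) = rot3 4 3 q"
      by cases (simp_all add: rot3_def succ_mod_def)
  qed
qed

definition swaps_near_top :: "nat \<Rightarrow> nat \<Rightarrow> nat" where
  "swaps_near_top n q = (if q = 0 then 1 else if q = 1 then 0 else if q = n - 3 then n - 2
     else if q = n - 2 then n - 3 else q)"

lemma run_second_near_top:
  assumes "distinct3 a b c" "n \<ge> 6" and q: "q < n"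
  shows "run n b a c (a # replicate 3 b @ a # replicate (n - 3) b) q = swaps_near_top n q"
proof -
  have ab: "b \<noteq> a" using assms by (auto simp: distinct3_def)
  define r where "r = swap01 ((swap01 q + 3) mod n)"
  have swq: "swap01 q < n" using swap01_lt q assms by simp
  have "(swap01 q + 3) mod n < n" using assms by simp
  then have r: "r < n" using swap01_lt assms by (simp add: r_def)
  have "run n b a c (a # replicate 3 b @ a # replicate (n - 3) b) q = (r + (n - 3)) mod n"
    using ab q swq r by (simp add: r_def run_Cons run_append run_replicate_first)
  also have "\<dots> = (if 3 \<le> r then r - 3 else r + n - 3)"
    using mod_add_diff[OF r, of 3] assms by simp
  finally have run_r: "run n b a c (a # replicate 3 b @ a # replicate (n - 3) b) q = (if 3 \<le> r then r - 3 else r + n - 3)" .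
  consider "q = 0" | "q = 1" | "q = n - 3" | "q = n - 2" | "q = n - 1" | "2 \<le> q \<and> q + 4 \<le> n"
    using q assms by linarith
  then show ?thesis
  proof cases
    case 1
    then have "r = 4" using assms by (simp add: r_def)
    then show ?thesis using run_r 1 by (simp add: swaps_near_top_def, (arith)?)
  next
    case 2
    then have "r = 3" using assms by (simp add: r_def)
    then show ?thesis using run_r 2 by (simp add: swaps_near_top_def, (arith)?)
  next
    case 3
    then have "swap01 q = q" using assms by (simp add: transpose_def)
    then have "swap01 q + 3 = n" using 3 assms by simp
    then have "r = 1" by (simp add: r_def)
    then show ?thesis using run_r 3 assms by (simp add: swaps_near_top_def, (arith)?)
  next
    case 4
    then have "swap01 q = q" using assms by (simp add: transpose_def)
    then have eq: "swap01 q + 3 = 1 + n" using 4 assms by simp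
    have "(swap01 q + 3) mod n = 1" unfolding eq using assms by (simp add: mod_Suc)
    then have "r = 0" by (simp add: r_def)
    then show ?thesis using run_r 4 assms by (simp add: swaps_near_top_def, (arith)?)
  next
    case 5
    then have "swap01 q = q" using assms by (simp add: transpose_def)
    then have eq: "swap01 q + 3 = 2 + n" using 5 assms by simp
    have "(swap01 q + 3) mod n = 2" unfolding eq using assms by (simp add: mod_Suc)
    then have "r = 2" by (simp add: r_def)
    then show ?thesis using run_r 5 assms by (simp add: swaps_near_top_def, (arith)?)
  next
    case 6
    then have "swap01 q + 3 = q + 3" "q + 3 < n" by (simp_all add: transpose_def)
    then have "r = q + 3" by (simp add: r_def transpose_def)
    then show ?thesis using run_r 6 by (simp add: swaps_near_top_def, (arith)?)
  qed
qed

lemma realizable_square_w: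
  assumes "distinct3 a b c" "n \<ge> 6"
  defines "w \<equiv> a # replicate 3 b @ a # replicate (n - 3) b"
  shows "realizable m n a b c (\<lambda>q. run m a b c w (run m a b c w q))"
proof -
  have "swaps_near_top n q < n" "swaps_near_top n (swaps_near_top n q) = q" if "q < n" for q
    using that assms by (auto simp: swaps_near_top_def)
  moreover have "run n b a c w q = swaps_near_top n q" if "q < n" for q
    unfolding w_def using run_second_near_top[OF assms(1,2) that] .
  ultimately have "run n b a c (w @ w) q = q" if "q < n" for q
    using that by (simp add: run_append)
  then show ?thesis unfolding realizable_def
    by (intro exI[of _ "w @ w"]) (simp add: run_append)
qed

text \<open>For \<open>m = 4\<close> and even \<open>n \<ge> 6\<close>, conjugate \<open>ww\<close> twice by \<open>a\<close> and square the result.\<close>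
lemma realizable_rot3_top_4_even:
  assumes "distinct3 a b c" "even n" "n \<ge> 6"
  shows "realizable 4 n a b c (rot3 4 3)"
proof -
  have ab: "b \<noteq> a" using assms by (auto simp: distinct3_def)
  have odd: "odd (n - 3)" using assms by simp
  define h where "h q = swap01 ((swap01 ((q + 1) mod 4) + 1) mod 4)" for q
  have hw: "run 4 a b c (a # replicate 3 b @ a # replicate (n - 3) b) q = h q" for q
    using ab odd by (simp add: run_Cons run_append run_replicate_second h_def)
  have k0: "realizable 4 n a b c (\<lambda>q. h (h q))"
    using realizable_square_w[OF assms(1,3), of 4] unfolding hw by simp
  define g1 where "g1 q = (h (h ((q + 1) mod 4)) + 7) mod 4" for q
  define g2 where "g2 q = (g1 ((q + 1) mod 4) + 7) mod 4" for q
  have k1: "realizable 4 n a b c g1"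
    using realizable_conj_first[OF assms(1) _ _ k0] assms by (simp add: g1_def[abs_def])
  have k2: "realizable 4 n a b c g2"
    using realizable_conj_first[OF assms(1) _ _ k1] assms by (simp add: g2_def[abs_def])
  have "realizable 4 n a b c (\<lambda>q. g2 (g2 q))"
    using realizable_comp[OF _ k2 k2] by simp
  then show ?thesis
  proof (rule realizable_cong)
    fix q :: nat assume "q < 4"
    then consider "q = 0" | "q = 1" | "q = 2" | "q = 3" by linarith
    then show "g2 (g2 q) = rot3 4 3 q"
      by cases (simp_all add: g2_def g1_def h_def rot3_def succ_mod_def)
  qed
qed

text \<open>For \<open>m \<ge> 5\<close>: conjugating the rotation by two with \<open>b\<close> and undoing the rotation gives a
  product of two transpositions; conjugating by \<open>a\<close> and \<open>b\<close> yields two more such products,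
  whose composition is the 3-cycle at \<open>m - 1\<close>.\<close>

lemma rot2_funpow: "(q::nat) < m \<Longrightarrow> ((\<lambda>q. (q + 2) mod m) ^^ j) q = (q + 2 * j) mod m"
proof (induction j)
  case (Suc j)
  have "((\<lambda>q. (q + 2) mod m) ^^ Suc j) q = ((q + 2 * j) mod m + 2) mod m" using Suc by simp
  also have "\<dots> = (q + 2 * j + 2) mod m" by (rule mod_add_left_eq)
  also have "q + 2 * j + 2 = q + 2 * Suc j" by simp
  finally show ?case .
qed simp

lemma mod_minus2:
  "(x::nat) < m \<Longrightarrow> 2 \<le> m \<Longrightarrow> (x + 2 * (m - 1)) mod m = (if 2 \<le> x then x - 2 else x + m - 2)"
proof -
  assume x: "x < m" and m: "2 \<le> m"
  have "x + 2 * (m - 1) = (x + (m - 2)) + m" using m by simp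
  then have "(x + 2 * (m - 1)) mod m = (x + (m - 2)) mod m" by (metis mod_add_self2)
  then show ?thesis using mod_add_diff[OF x m] by simp
qed

definition swaps_top :: "nat \<Rightarrow> nat \<Rightarrow> nat" where
  "swaps_top m q = (if q = 0 then 1 else if q = 1 then 0 else if q = m - 2 then m - 1
     else if q = m - 1 then m - 2 else q)"

definition swaps_wrap0 :: "nat \<Rightarrow> nat \<Rightarrow> nat" where
  "swaps_wrap0 m q = (if q = m - 1 then 0 else if q = 0 then m - 1 else if q = m - 3 then m - 2
     else if q = m - 2 then m - 3 else q)"

definition swaps_wrap1 :: "nat \<Rightarrow> nat \<Rightarrow> nat" where
  "swaps_wrap1 m q = (if q = m - 1 then 1 else if q = 1 then m - 1 else if q = m - 3 then m - 2
     else if q = m - 2 then m - 3 else q)"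

lemma swaps_top_eq:
  assumes m: "m \<ge> 5" and q: "q < m"
  shows "(swap01 ((swap01 q + 2) mod m) + 2 * (m - 1)) mod m = swaps_top m q"
proof -
  have M: "(x + 2 * (m - 1)) mod m = (if 2 \<le> x then x - 2 else x + m - 2)" if "x < m" for x
    using mod_minus2[OF that] m by simp
  consider "q = 0" | "q = 1" | "q = m - 2" | "q = m - 1" | "2 \<le> q \<and> q + 3 \<le> m"
    using q m by linarith
  then show ?thesis
  proof cases
    case 1
    then have v: "swap01 ((swap01 q + 2) mod m) = 3" using m by (simp add: transpose_def)
    show ?thesis unfolding v using M[of 3] 1 m by (simp add: swaps_top_def)
  next
    case 2
    then have v: "swap01 ((swap01 q + 2) mod m) = 2" using m by (simp add: transpose_def)
    show ?thesis unfolding v using M[of 2] 2 m by (simp add: swaps_top_def)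
  next
    case 3
    then have "swap01 q + 2 = m" using m by (simp add: transpose_def, arith)
    then have v: "swap01 ((swap01 q + 2) mod m) = 1" by simp
    show ?thesis unfolding v using M[of 1] 3 m by (simp add: swaps_top_def, (arith)?)
  next
    case 4
    then have "swap01 q + 2 = 1 + m" using m by (simp add: transpose_def)
    then have "(swap01 q + 2) mod m = 1" using m by (simp add: mod_Suc)
    then have v: "swap01 ((swap01 q + 2) mod m) = 0" by simp
    show ?thesis unfolding v using M[of 0] 4 m by (simp add: swaps_top_def, (arith)?)
  next
    case 5
    then have v: "swap01 ((swap01 q + 2) mod m) = q + 2" using m by (simp add: transpose_def)
    show ?thesis unfolding v using M[of "q + 2"] 5 m by (simp add: swaps_top_def, arith)
  qed
qed

lemma realizable_swaps_top:
  assumes "distinct3 a b c" "m \<ge> 5" "n \<ge> 2"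
  shows "realizable m n a b c (swaps_top m)"
proof -
  have m2: "m \<ge> 2" using assms by simp
  have r2: "realizable m n a b c (\<lambda>q. (q + 2) mod m)" using realizable_rot2[OF assms(1)] .
  have r: "realizable m n a b c (\<lambda>q. (q + 2 * (m - 1)) mod m)"
    by (rule realizable_cong[OF realizable_funpow[OF m2 r2, of "m - 1"] rot2_funpow])
  have "realizable m n a b c (\<lambda>q. swap01 ((swap01 q + 2) mod m))"
    using realizable_conj_second[OF assms(1) m2 assms(3) r2] .
  then have "realizable m n a b c (\<lambda>q. (swap01 ((swap01 q + 2) mod m) + 2 * (m - 1)) mod m)"
    using realizable_comp[OF m2 _ r] by blast
  then show ?thesis
    by (rule realizable_cong) (rule swaps_top_eq[OF assms(2)])
qed

lemma swaps_wrap0_eq: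
  assumes m: "m \<ge> 5" and q: "q < m"
  shows "(swaps_top m ((q + 1) mod m) + (2 * m - 1)) mod m = swaps_wrap0 m q"
proof -
  have P: "(x + (2 * m - 1)) mod m = (if x = 0 then m - 1 else x - 1)" if "x < m" for x
    using mod_pred[OF that] .
  consider "q = m - 1" | "q = 0" | "q = m - 3" | "q = m - 2" | "1 \<le> q \<and> q + 4 \<le> m"
    using q m by linarith
  then show ?thesis
  proof cases
    case 1
    have e: "(q + 1) mod m = 0" and t: "swaps_top m 0 = 1" using 1 m by (simp_all add: swaps_top_def)
    show ?thesis unfolding e t using P[of 1] 1 m by (simp add: swaps_wrap0_def, (arith)?)
  next
    case 2
    have e: "(q + 1) mod m = 1" and t: "swaps_top m 1 = 0" using 2 m by (simp_all add: swaps_top_def)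
    show ?thesis unfolding e t using P[of 0] 2 m by (simp add: swaps_wrap0_def, (arith)?)
  next
    case 3
    have e: "(q + 1) mod m = m - 2" and t: "swaps_top m (m - 2) = m - 1"
      using 3 m by (simp_all add: swaps_top_def)
    show ?thesis unfolding e t using P[of "m - 1"] 3 m by (simp add: swaps_wrap0_def, (arith)?)
  next
    case 4
    have e: "(q + 1) mod m = m - 1" and t: "swaps_top m (m - 1) = m - 2"
      using 4 m by (simp_all add: swaps_top_def)
    show ?thesis unfolding e t using P[of "m - 2"] 4 m by (simp add: swaps_wrap0_def, (arith)?)
  next
    case 5
    have e: "(q + 1) mod m = q + 1" using 5 m by simp
    have "q + 1 \<noteq> 0" "q + 1 \<noteq> 1" "q + 1 \<noteq> m - 2" "q + 1 \<noteq> m - 1" using 5 m by linarith+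
    then have t: "swaps_top m (q + 1) = q + 1" by (simp add: swaps_top_def)
    show ?thesis unfolding e t using P[of "q + 1"] 5 m by (simp add: swaps_wrap0_def, (arith)?)
  qed
qed

lemma realizable_swaps_wrap0:
  assumes "distinct3 a b c" "m \<ge> 5" "n \<ge> 2"
  shows "realizable m n a b c (swaps_wrap0 m)"
proof -
  have m2: "m \<ge> 2" using assms by simp
  have "realizable m n a b c (\<lambda>q. (swaps_top m ((q + 1) mod m) + (2 * m - 1)) mod m)"
    using realizable_conj_first[OF assms(1) m2 assms(3) realizable_swaps_top[OF assms]] .
  then show ?thesis
    by (rule realizable_cong) (rule swaps_wrap0_eq[OF assms(2)])
qed

lemma realizable_swaps_wrap1:
  assumes "distinct3 a b c" "m \<ge> 5" "n \<ge> 2"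
  shows "realizable m n a b c (swaps_wrap1 m)"
proof -
  have "realizable m n a b c (\<lambda>q. swap01 (swaps_wrap0 m (swap01 q)))"
    using realizable_conj_second[OF assms(1) _ assms(3) realizable_swaps_wrap0[OF assms]] assms(2)
    by simp
  then show ?thesis
  proof (rule realizable_cong)
    fix q assume q: "q < m"
    consider "q = 0" | "q = 1" | "q = m - 1" | "q = m - 3" | "q = m - 2" | "2 \<le> q \<and> q + 4 \<le> m"
      using q assms by linarith
    then show "swap01 (swaps_wrap0 m (swap01 q)) = swaps_wrap1 m q"
      by cases (use assms in \<open>simp add: transpose_def swaps_wrap0_def swaps_wrap1_def, (arith)?\<close>)+
  qed
qed

lemma realizable_rot3_top_ge5:
  assumes "distinct3 a b c" "m \<ge> 5" "n \<ge> 2"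
  shows "realizable m n a b c (rot3 m (m - 1))"
proof -
  have "realizable m n a b c (\<lambda>q. swaps_wrap0 m (swaps_wrap1 m q))"
    using realizable_comp[OF _ realizable_swaps_wrap1[OF assms] realizable_swaps_wrap0[OF assms]]
      assms(2) by simp
  then show ?thesis
  proof (rule realizable_cong)
    fix q assume q: "q < m"
    consider "q = 0" | "q = 1" | "q = m - 1" | "q = m - 3" | "q = m - 2" | "2 \<le> q \<and> q + 4 \<le> m"
      using q assms by linarith
    then show "swaps_wrap0 m (swaps_wrap1 m q) = rot3 m (m - 1) q"
      by cases (use assms in \<open>simp add: rot3_def succ_mod_eq swaps_wrap0_def swaps_wrap1_def, (arith)?\<close>)+
  qed
qed

theorem realizable_rot3:
  assumes "distinct3 a b c" "m \<ge> 3" "n \<ge> 3" "(m, n) \<noteq> (4, 4)" "i < m"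
  shows "realizable m n a b c (rot3 m i)"
proof -
  have "realizable m n a b c (rot3 m (m - 1))"
  proof -
    consider "m = 3" | "m = 4" "odd n" | "m = 4" "even n" | "m \<ge> 5" using assms by linarith
    then show ?thesis
    proof cases
      case 3
      have "n \<noteq> 4" using assms 3 by simp
      then have "n \<ge> 6" using assms 3 by presburger
      then show ?thesis using realizable_rot3_top_4_even[OF assms(1)] 3 by simp
    qed (use assms realizable_rot3_top_3 realizable_rot3_top_4_odd realizable_rot3_top_ge5 in auto)
  qed
  then show ?thesis using realizable_rot3_from_top assms by simp
qed

section \<open>From 3-cycles to arbitrary sets of the same size\<close>

text \<open>\<open>preim \<sigma> S k\<close>: the preimage of \<open>S\<close> under \<open>\<sigma>\<close> within the states \<open>{..<k}\<close>; reading a word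
  acting as \<open>\<sigma>\<close> transforms the state \<open>S\<close> of the reversed subset automaton this way.\<close>
definition preim :: "(nat \<Rightarrow> nat) \<Rightarrow> nat set \<Rightarrow> nat \<Rightarrow> nat set" where
  "preim \<sigma> S k = {q. q < k \<and> \<sigma> q \<in> S}"

lemma preim_subset: "preim \<sigma> S k \<subseteq> {..<k}"
  by (auto simp: preim_def)

text \<open>A property of subsets of \<open>{..<k}\<close> that is preserved by the preimages under all 3-cycles
  \<open>rot3 k i\<close> depends only on the size of the set.\<close>
locale rot3_invariant =
  fixes k :: nat and P :: "nat set \<Rightarrow> bool"
  assumes k3: "k \<ge> 3"
    and invariant: "\<And>i S. i < k \<Longrightarrow> S \<subseteq> {..<k} \<Longrightarrow> P S \<Longrightarrow> P (preim (rot3 k i) S k)"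
begin

text \<open>An adjacent transposition either fixes \<open>S\<close> or agrees on \<open>S\<close> with one or two applications
  of the 3-cycle through \<open>p - 1, p, p + 1\<close>.\<close>
lemma adjacent_transpose:
  assumes p: "p + 1 < k" and S: "S \<subseteq> {..<k}" and PS: "P S"
  shows "P (preim (transpose p (p + 1)) S k)"
proof -
  define i where "i = (if p = 0 then k - 1 else p - 1)"
  have i: "i < k" "succ_mod k i = p" "succ_mod k (succ_mod k i) = p + 1" "i \<noteq> p" "i \<noteq> p + 1"
    using k3 p by (auto simp: i_def succ_mod_eq)
  define S1 where "S1 = preim (rot3 k i) S k"
  define S2 where "S2 = preim (rot3 k i) S1 k"
  have P1: "P S1" using invariant[OF i(1) S PS] by (simp add: S1_def)
  have P2: "P S2" using invariant[OF i(1) _ P1] preim_subset by (simp add: S2_def S1_def)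
  have c: "rot3 k i q = (if q = i then p + 1 else if q = p then i else if q = p + 1 then p else q)" for q
    using i by (simp add: rot3_def)
  have m1: "q \<in> S1 \<longleftrightarrow>
      q < k \<and> (if q = i then p + 1 else if q = p then i else if q = p + 1 then p else q) \<in> S" for q
    by (simp add: S1_def preim_def c)
  have m2: "q \<in> S2 \<longleftrightarrow>
      q < k \<and> (if q = i then p + 1 else if q = p then i else if q = p + 1 then p else q) \<in> S1" for q
    by (simp add: S2_def preim_def c)
  have mt: "q \<in> preim (transpose p (p + 1)) S k \<longleftrightarrow>
      q < k \<and> (if q = p then p + 1 else if q = p + 1 then p else q) \<in> S" for q
    by (simp add: preim_def transpose_def)
  consider "(p \<in> S) = (p + 1 \<in> S)" | "(i \<in> S) = (p + 1 \<in> S)" | "(i \<in> S) = (p \<in> S)" by blast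
  then show ?thesis
  proof cases
    case 1
    have "preim (transpose p (p + 1)) S k = S"
      unfolding set_eq_iff mt using 1 S p by auto
    then show ?thesis using PS by simp
  next
    case 2
    have "preim (transpose p (p + 1)) S k = S1"
      unfolding set_eq_iff mt m1 using 2 S p i by auto
    then show ?thesis using P1 by simp
  next
    case 3
    have "preim (transpose p (p + 1)) S k = S2"
      unfolding set_eq_iff mt m2 m1 using 3 S p i by auto
    then show ?thesis using P2 by simp
  qed
qed

text \<open>Every transposition is a conjugate of an adjacent one by adjacent ones.\<close>
lemma transpose_lt:
  "x < y \<Longrightarrow> y < k \<Longrightarrow> S \<subseteq> {..<k} \<Longrightarrow> P S \<Longrightarrow> P (preim (transpose x y) S k)"
proof (induction y arbitrary: S)
  case 0 then show ?case by simp
next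
  case (Suc y)
  show ?case
  proof (cases "x = y")
    case True then show ?thesis using adjacent_transpose Suc.prems by simp
  next
    case False
    then have xy: "x < y" using Suc.prems by simp
    define S1 where "S1 = preim (transpose y (y + 1)) S k"
    define S2 where "S2 = preim (transpose x y) S1 k"
    have "P S1" using adjacent_transpose[of y S] Suc.prems by (simp add: S1_def)
    then have "P S2" using Suc.IH[OF xy] Suc.prems preim_subset by (simp add: S2_def S1_def)
    then have "P (preim (transpose y (y + 1)) S2 k)"
      using adjacent_transpose[of y S2] Suc.prems preim_subset by (simp add: S2_def)
    moreover have "preim (transpose y (y + 1)) S2 k = preim (transpose x (Suc y)) S k"
      using xy Suc.prems by (auto simp: S2_def S1_def preim_def transpose_def)
    ultimately show ?thesis by simp
  qed
qed

lemma exchange: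
  assumes S: "S \<subseteq> {..<k}" and PS: "P S" and x: "x \<in> S" and y: "y < k" "y \<notin> S"
  shows "P (insert y (S - {x}))"
proof -
  have "x \<noteq> y" "x < k" using x y S by auto
  then have "P (preim (transpose x y) S k)"
    using transpose_lt[of x y S] transpose_lt[of y x S] y S PS
    by (cases "x < y") (auto simp: transpose_commute)
  moreover have "preim (transpose x y) S k = insert y (S - {x})"
    using x y S by (auto simp: preim_def transpose_def)
  ultimately show ?thesis by simp
qed

theorem same_card:
  "S \<subseteq> {..<k} \<Longrightarrow> S' \<subseteq> {..<k} \<Longrightarrow> card S = card S' \<Longrightarrow> P S \<Longrightarrow> P S'"
proof (induction "card (S - S')" arbitrary: S)
  case 0
  have fin: "finite S" "finite S'" using 0 finite_subset[OF _ finite_lessThan] by auto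
  then have "S \<subseteq> S'" using 0 by auto
  then have "S = S'" using 0 fin by (metis card_subset_eq)
  then show ?case using 0 by simp
next
  case (Suc d)
  have fin: "finite S" "finite S'" using Suc.prems finite_subset[OF _ finite_lessThan] by auto
  obtain x where x: "x \<in> S" "x \<notin> S'" using Suc.hyps(2) by (metis Diff_iff card.empty ex_in_conv nat.simps(3))
  have "\<not> S' \<subseteq> S"
  proof
    assume "S' \<subseteq> S"
    then have "S' = S" using fin Suc.prems(3) by (metis card_subset_eq)
    then show False using x by simp
  qed
  then obtain y where y: "y \<in> S'" "y \<notin> S" by auto
  define S1 where "S1 = insert y (S - {x})"
  have P1: "P S1" unfolding S1_def using exchange x y Suc.prems by auto
  have "card S > 0" using fin x card_gt_0_iff by blast
  then have "card S1 = card S" using fin x y by (simp add: S1_def card_insert_if)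
  moreover have "S1 - S' = (S - S') - {x}" using x y by (auto simp: S1_def)
  then have "card (S1 - S') = d" using Suc.hyps(2) x fin by simp
  moreover have "S1 \<subseteq> {..<k}" using Suc.prems x y by (auto simp: S1_def)
  ultimately show ?case using Suc.hyps(1)[of S1] P1 Suc.prems by simp
qed

end

section \<open>All pairs are reachable outside the case \<open>m = n = 4\<close>\<close>

lemma reach_pairs_subset: "(S, T) \<in> reach_pairs m n a b c \<Longrightarrow> S \<subseteq> {..<m} \<and> T \<subseteq> {..<n}"
  unfolding reach_pairs_def rstate_def by blast

lemma reach_pairs_start: "m \<ge> 1 \<Longrightarrow> n \<ge> 1 \<Longrightarrow> ({m - 1}, {n - 1}) \<in> reach_pairs m n a b c"
proof -
  assume "m \<ge> 1" "n \<ge> 1"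
  moreover have "rstate k a' b' c' [] = {k - 1}" if "k \<ge> 1" for k a' b' c'
    using that by (auto simp: rstate_def)
  moreover have "(rstate m a b c [], rstate n b a c []) \<in> reach_pairs m n a b c"
    by (simp add: reach_pairs_def)
  ultimately show ?thesis by simp
qed

text \<open>Appending \<open>rev v\<close> to \<open>u\<close> replaces both state sets by their preimages under \<open>v\<close>.\<close>
lemma reach_pairs_step:
  assumes "m \<ge> 2" "n \<ge> 2" "(S, T) \<in> reach_pairs m n a b c"
  shows "(preim (run m a b c v) S m, preim (run n b a c v) T n) \<in> reach_pairs m n a b c"
proof -
  obtain u where u: "S = rstate m a b c u" "T = rstate n b a c u"
    using assms(3) by (auto simp: reach_pairs_def)
  have eq: "rstate k a' b' c' (u @ rev v) = preim (run k a' b' c' v) (rstate k a' b' c' u) k"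
    if "k \<ge> 2" for k a' b' c'
  proof (rule set_eqI)
    fix q
    have "q < k \<Longrightarrow> run k a' b' c' v q < k" using run_lt[OF that] by blast
    then show "q \<in> rstate k a' b' c' (u @ rev v) \<longleftrightarrow> q \<in> preim (run k a' b' c' v) (rstate k a' b' c' u) k"
      unfolding rstate_def preim_def by (auto simp: run_append)
  qed
  have "(rstate m a b c (u @ rev v), rstate n b a c (u @ rev v)) \<in> reach_pairs m n a b c"
    unfolding reach_pairs_def by (rule rangeI)
  then show ?thesis using eq[of m a b c] eq[of n b a c] assms u by simp
qed

lemma reach_pairs_realizable_first:
  assumes "m \<ge> 2" "n \<ge> 2" "realizable m n a b c \<sigma>" "(S, T) \<in> reach_pairs m n a b c"
  shows "(preim \<sigma> S m, T) \<in> reach_pairs m n a b c"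
proof -
  obtain v where v: "\<forall>q<n. run n b a c v q = q" "\<forall>q<m. run m a b c v q = \<sigma> q"
    using assms(3) unfolding realizable_def by blast
  have "preim (run m a b c v) S m = preim \<sigma> S m" using v by (auto simp: preim_def)
  moreover have "preim (run n b a c v) T n = T"
    using v reach_pairs_subset[OF assms(4)] by (auto simp: preim_def)
  ultimately show ?thesis using reach_pairs_step[OF assms(1,2,4), of v] by simp
qed

lemma reach_pairs_realizable_second:
  assumes "m \<ge> 2" "n \<ge> 2" "realizable n m b a c \<tau>" "(S, T) \<in> reach_pairs m n a b c"
  shows "(S, preim \<tau> T n) \<in> reach_pairs m n a b c"
proof -
  obtain v where v: "\<forall>q<m. run m a b c v q = q" "\<forall>q<n. run n b a c v q = \<tau> q"
    using assms(3) unfolding realizable_def by blast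
  have "preim (run n b a c v) T n = preim \<tau> T n" using v by (auto simp: preim_def)
  moreover have "preim (run m a b c v) S m = S"
    using v reach_pairs_subset[OF assms(4)] by (auto simp: preim_def)
  ultimately show ?thesis using reach_pairs_step[OF assms(1,2,4), of v] by simp
qed

definition c_preim :: "nat \<Rightarrow> nat set \<Rightarrow> nat set" where
  "c_preim k S = preim (\<lambda>q. if q = k - 1 then 0 else q) S k"

lemma reach_pairs_c:
  assumes "distinct3 a b c" "m \<ge> 2" "n \<ge> 2" "(S, T) \<in> reach_pairs m n a b c"
  shows "(c_preim m S, c_preim n T) \<in> reach_pairs m n a b c"
proof -
  have "c \<noteq> a" "c \<noteq> b" using assms(1) by (auto simp: distinct3_def)
  then have "preim (run m a b c [c]) S m = c_preim m S" "preim (run n b a c [c]) T n = c_preim n T"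
    by (simp_all add: c_preim_def preim_def run_Cons)
  then show ?thesis using reach_pairs_step[OF assms(2,3,4), of "[c]"] by simp
qed

lemma c_preim_card_change:
  assumes k: "k \<ge> 3" and j: "j \<le> k"
    and j': "j' = j \<or> (1 \<le> j \<and> j \<le> k - 1 \<and> (j' = j + 1 \<or> j' = j - 1))"
  shows "\<exists>S. S \<subseteq> {..<k} \<and> card S = j \<and> card (c_preim k S) = j'"
proof -
  consider "j' = j + 1" "1 \<le> j" "j \<le> k - 1" | "j' = j - 1" "1 \<le> j" "j \<le> k - 1"
    | "j' = j" "j \<le> k - 2" | "j' = j" "j = k - 1" | "j' = j" "j = k" using j j' by linarith
  then show ?thesis
  proof cases
    case 1
    have "c_preim k {..<j} = insert (k - 1) {..<j}" using 1 k by (auto simp: c_preim_def preim_def)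
    then show ?thesis using 1 by (intro exI[of _ "{..<j}"]) auto
  next
    case 2
    have "c_preim k {k - j..<k} = {k - j..<k - 1}" using 2 k by (auto simp: c_preim_def preim_def)
    then show ?thesis using 2 by (intro exI[of _ "{k - j..<k}"]) auto
  next
    case 3
    have "c_preim k {1..<j + 1} = {1..<j + 1}" using 3 k by (auto simp: c_preim_def preim_def)
    then show ?thesis using 3 by (intro exI[of _ "{1..<j + 1}"]) auto
  next
    case 4
    have "c_preim k ({..<k} - {1}) = {..<k} - {1}" using 4 k by (auto simp: c_preim_def preim_def)
    moreover have "card ({..<k} - {1}) = k - 1" using k by simp
    ultimately show ?thesis using 4 by (intro exI[of _ "{..<k} - {1}"]) auto
  next
    case 5
    have "c_preim k {..<k} = {..<k}" using 5 k by (auto simp: c_preim_def preim_def)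
    then show ?thesis using 5 by (intro exI[of _ "{..<k}"]) auto
  qed
qed

lemma reach_state_fixing_other:
  assumes "m \<ge> 3" "\<And>i. i < m \<Longrightarrow> realizable m n a b c (rot3 m i)" "p < m"
  shows "\<exists>v. (\<forall>q<n. run n b a c v q = q) \<and> run m a b c v 0 = p"
proof -
  have "d < m \<Longrightarrow> \<exists>v. (\<forall>q<n. run n b a c v q = q) \<and> run m a b c v 0 = m - 1 - d" for d
  proof (induction d)
    case 0
    obtain w where w: "\<forall>q<n. run n b a c w q = q" "\<forall>q<m. run m a b c w q = rot3 m (m - 1) q"
      using assms(2)[of "m - 1"] assms(1) unfolding realizable_def by auto
    have "rot3 m (m - 1) 0 = m - 1" using assms(1) by (simp add: rot3_def succ_mod_eq)
    then show ?case using w assms(1) by (intro exI[of _ w]) simp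
  next
    case (Suc d)
    then obtain v where v: "\<forall>q<n. run n b a c v q = q" "run m a b c v 0 = m - 1 - d" by auto
    define p where "p = m - 1 - Suc d"
    have p: "p < m" "succ_mod m p = m - 1 - d" using Suc.prems by (auto simp: p_def succ_mod_eq)
    obtain w where w: "\<forall>q<n. run n b a c w q = q" "\<forall>q<m. run m a b c w q = rot3 m p q"
      using assms(2)[OF p(1)] unfolding realizable_def by auto
    have "succ_mod m p \<noteq> p" using p Suc.prems by (simp add: p_def)
    then have "rot3 m p (m - 1 - d) = p" using p by (simp add: rot3_def)
    moreover have "m - 1 - d < m" using Suc.prems by simp
    ultimately have "run m a b c (v @ w) 0 = p" using v w by (simp add: run_append)
    moreover have "\<forall>q<n. run n b a c (v @ w) q = q" using v w by (simp add: run_append)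
    ultimately show ?case unfolding p_def by blast
  qed
  from this[of "m - 1 - p"] show ?thesis using assms by simp
qed

locale not_4_4 =
  fixes m n :: nat and a b c :: letter
  assumes distinct: "distinct3 a b c" and m3: "m \<ge> 3" and n3: "n \<ge> 3"
    and not44: "(m, n) \<noteq> (4, 4)"
begin

lemma m2: "m \<ge> 2" and n2: "n \<ge> 2"
  using m3 n3 by auto

lemma rot3_first: "i < m \<Longrightarrow> realizable m n a b c (rot3 m i)"
  using realizable_rot3[OF distinct m3 n3 not44] .

lemma rot3_second: "i < n \<Longrightarrow> realizable n m b a c (rot3 n i)"
  using realizable_rot3[OF distinct3_swap[OF distinct] n3 m3] not44 by auto

lemma reach_pairs_same_card_first:
  assumes "(S, T) \<in> reach_pairs m n a b c" "S' \<subseteq> {..<m}" "card S' = card S"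
  shows "(S', T) \<in> reach_pairs m n a b c"
proof -
  interpret rot3_invariant m "\<lambda>X. (X, T) \<in> reach_pairs m n a b c"
    by standard (use m3 m2 n2 reach_pairs_realizable_first rot3_first in auto)
  show ?thesis
    using same_card[of S S'] assms reach_pairs_subset[OF assms(1)] by auto
qed

lemma reach_pairs_same_card_second:
  assumes "(S, T) \<in> reach_pairs m n a b c" "T' \<subseteq> {..<n}" "card T' = card T"
  shows "(S, T') \<in> reach_pairs m n a b c"
proof -
  interpret rot3_invariant n "\<lambda>X. (S, X) \<in> reach_pairs m n a b c"
    by standard (use n3 m2 n2 reach_pairs_realizable_second rot3_second in auto)
  show ?thesis
    using same_card[of T T'] assms reach_pairs_subset[OF assms(1)] by auto
qed

definition all_of_sizes :: "nat \<Rightarrow> nat \<Rightarrow> bool" where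
  "all_of_sizes j l \<longleftrightarrow> (\<forall>S T. S \<subseteq> {..<m} \<longrightarrow> T \<subseteq> {..<n} \<longrightarrow> card S = j \<longrightarrow> card T = l
     \<longrightarrow> (S, T) \<in> reach_pairs m n a b c)"

lemma all_of_sizes_of_reachable:
  "(S, T) \<in> reach_pairs m n a b c \<Longrightarrow> all_of_sizes (card S) (card T)"
  unfolding all_of_sizes_def
  using reach_pairs_same_card_first reach_pairs_same_card_second by metis

lemma all_of_sizes_step:
  assumes "all_of_sizes j l" and j: "j \<le> m" and l: "l \<le> n"
    and j': "j' = j \<or> (1 \<le> j \<and> j \<le> m - 1 \<and> (j' = j + 1 \<or> j' = j - 1))"
    and l': "l' = l \<or> (1 \<le> l \<and> l \<le> n - 1 \<and> (l' = l + 1 \<or> l' = l - 1))"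
  shows "all_of_sizes j' l'"
proof -
  obtain S where S: "S \<subseteq> {..<m}" "card S = j" "card (c_preim m S) = j'"
    using c_preim_card_change[OF m3 j j'] by blast
  obtain T where T: "T \<subseteq> {..<n}" "card T = l" "card (c_preim n T) = l'"
    using c_preim_card_change[OF n3 l l'] by blast
  have "(S, T) \<in> reach_pairs m n a b c" using assms(1) S T unfolding all_of_sizes_def by blast
  then have "(c_preim m S, c_preim n T) \<in> reach_pairs m n a b c"
    using reach_pairs_c[OF distinct m2 n2] by blast
  then show ?thesis using all_of_sizes_of_reachable S T by metis
qed

text \<open>Starting from the sizes \<open>(1, 1)\<close> of the initial pair, all sizes are reached.\<close>
lemma all_of_sizes_all: "j \<le> m \<Longrightarrow> l \<le> n \<Longrightarrow> all_of_sizes j l"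
proof -
  have one_one: "all_of_sizes 1 1"
    using all_of_sizes_of_reachable[OF reach_pairs_start[of m n a b c]] m3 n3 by simp
  have one_l: "all_of_sizes 1 l" if "l \<le> n" for l
  proof (cases "l = 0")
    case True then show ?thesis using all_of_sizes_step[OF one_one, of 1 0] m3 n3 by simp
  next
    case False
    have "1 \<le> l' \<Longrightarrow> l' \<le> n \<Longrightarrow> all_of_sizes 1 l'" for l'
    proof (induction l' rule: nat_induct_at_least)
      case base show ?case by (rule one_one)
    next
      case (Suc l') then show ?case using all_of_sizes_step[of 1 l' 1 "l' + 1"] m3 by simp
    qed
    then show ?thesis using that False by simp
  qed
  fix j l assume j: "j \<le> m" and l: "l \<le> n"
  show "all_of_sizes j l"
  proof (cases "j = 0")
    case True then show ?thesis using all_of_sizes_step[OF one_l[OF l], of 0 l] m3 l by simp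
  next
    case False
    have "1 \<le> j' \<Longrightarrow> j' \<le> m \<Longrightarrow> all_of_sizes j' l" for j'
    proof (induction j' rule: nat_induct_at_least)
      case base show ?case by (rule one_l[OF l])
    next
      case (Suc j') then show ?case using all_of_sizes_step[of j' l "j' + 1" l] l by simp
    qed
    then show ?thesis using j False by simp
  qed
qed

theorem reach_pairs_all: "reach_pairs m n a b c = Pow {..<m} \<times> Pow {..<n}"
proof (intro set_eqI iffI)
  fix x assume "x \<in> reach_pairs m n a b c"
  then show "x \<in> Pow {..<m} \<times> Pow {..<n}" using reach_pairs_subset by (cases x) auto
next
  fix x assume x: "x \<in> Pow {..<m} \<times> Pow {..<n}"
  obtain S T where st: "x = (S, T)" "S \<subseteq> {..<m}" "T \<subseteq> {..<n}" using x by auto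
  have "card S \<le> m" "card T \<le> n" using st card_mono[OF finite_lessThan] by fastforce+
  then show "x \<in> reach_pairs m n a b c" using all_of_sizes_all st unfolding all_of_sizes_def by blast
qed

theorem connected: "pairs_connected m n a b c"
  unfolding pairs_connected_def
proof (intro allI impI)
  fix p q assume p: "p < m" and q: "q < n"
  obtain v1 where v1: "\<forall>x<n. run n b a c v1 x = x" "run m a b c v1 0 = p"
    using reach_state_fixing_other[OF m3 rot3_first p] by blast
  obtain v2 where v2: "\<forall>x<m. run m a b c v2 x = x" "run n b a c v2 0 = q"
    using reach_state_fixing_other[OF n3 rot3_second q] by blast
  show "\<exists>w. run m a b c w 0 = p \<and> run n b a c w 0 = q"
    using v1 v2 p n3 by (intro exI[of _ "v1 @ v2"]) (simp add: run_append)
qed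

end

section \<open>Counting pair sets\<close>

abbreviation state_pairs :: "nat \<Rightarrow> nat \<Rightarrow> (nat set \<times> nat set) set" where
  "state_pairs m n \<equiv> Pow {..<m} \<times> Pow {..<n}"

lemma card_image_collapse:
  assumes "finite A" "inj_on f (A \<inter> G)" "\<forall>x\<in>A - G. f x = z" "y \<in> A - G" "\<forall>x\<in>A \<inter> G. f x \<noteq> z"
  shows "card (f ` A) = card (A \<inter> G) + 1"
proof -
  have "f ` A = insert z (f ` (A \<inter> G))" using assms(3,4) by (auto simp: image_iff)
  moreover have "z \<notin> f ` (A \<inter> G)" using assms(5) by auto
  moreover have "finite (A \<inter> G)" using assms(1) by simp
  ultimately show ?thesis using card_image[OF assms(2)] by simp
qed

lemma pair_set_and: "(S, T) \<in> state_pairs m n \<Longrightarrow> pair_set m n (\<and>) (S, T) = S \<times> T"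
  by (auto simp: pair_set_def)

lemma pair_set_diff:
  "(S, T) \<in> state_pairs m n \<Longrightarrow> pair_set m n (\<lambda>x y. x \<and> \<not> y) (S, T) = S \<times> ({..<n} - T)"
  by (auto simp: pair_set_def)

lemma pair_set_or:
  "pair_set m n (\<or>) (S, T) = {..<m} \<times> {..<n} - ({..<m} - S) \<times> ({..<n} - T)"
  by (auto simp: pair_set_def)

lemma pair_set_and_inj:
  "inj_on (pair_set m n (\<and>)) (state_pairs m n \<inter> {x. fst x \<noteq> {} \<and> snd x \<noteq> {}})"
proof (rule inj_onI)
  fix x y assume x: "x \<in> state_pairs m n \<inter> {x. fst x \<noteq> {} \<and> snd x \<noteq> {}}"
    and y: "y \<in> state_pairs m n \<inter> {x. fst x \<noteq> {} \<and> snd x \<noteq> {}}"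
    and e: "pair_set m n (\<and>) x = pair_set m n (\<and>) y"
  obtain S T S' T' where xy: "x = (S, T)" "y = (S', T')" by (cases x, cases y) auto
  have "S \<times> T = S' \<times> T'" using e x y xy by (simp add: pair_set_and)
  then show "x = y" using x y xy by (simp add: times_eq_iff)
qed

lemma pair_set_diff_inj:
  "inj_on (pair_set m n (\<lambda>x y. x \<and> \<not> y)) (state_pairs m n \<inter> {x. fst x \<noteq> {} \<and> snd x \<noteq> {..<n}})"
proof (rule inj_onI)
  fix x y assume x: "x \<in> state_pairs m n \<inter> {x. fst x \<noteq> {} \<and> snd x \<noteq> {..<n}}"
    and y: "y \<in> state_pairs m n \<inter> {x. fst x \<noteq> {} \<and> snd x \<noteq> {..<n}}"
    and e: "pair_set m n (\<lambda>x y. x \<and> \<not> y) x = pair_set m n (\<lambda>x y. x \<and> \<not> y) y"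
  obtain S T S' T' where xy: "x = (S, T)" "y = (S', T')" by (cases x, cases y) auto
  have ne: "{..<n} - T \<noteq> {}" "{..<n} - T' \<noteq> {}" "S \<noteq> {}" using x y xy by auto
  have "S \<times> ({..<n} - T) = S' \<times> ({..<n} - T')" using e x y xy by (simp add: pair_set_diff)
  then have "S = S'" "{..<n} - T = {..<n} - T'" using ne by (auto simp: times_eq_iff)
  then show "x = y" using x y xy by blast
qed

lemma pair_set_or_inj:
  "inj_on (pair_set m n (\<or>)) (state_pairs m n \<inter> {x. fst x \<noteq> {..<m} \<and> snd x \<noteq> {..<n}})"
proof (rule inj_onI)
  fix x y assume x: "x \<in> state_pairs m n \<inter> {x. fst x \<noteq> {..<m} \<and> snd x \<noteq> {..<n}}"
    and y: "y \<in> state_pairs m n \<inter> {x. fst x \<noteq> {..<m} \<and> snd x \<noteq> {..<n}}"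
    and e: "pair_set m n (\<or>) x = pair_set m n (\<or>) y"
  obtain S T S' T' where xy: "x = (S, T)" "y = (S', T')" by (cases x, cases y) auto
  have ne: "{..<m} - S \<noteq> {}" "{..<n} - T \<noteq> {}" using x xy by auto
  have "({..<m} - S) \<times> ({..<n} - T) = {..<m} \<times> {..<n} - pair_set m n (\<or>) (S, T)"
    "({..<m} - S') \<times> ({..<n} - T') = {..<m} \<times> {..<n} - pair_set m n (\<or>) (S', T')"
    by (auto simp: pair_set_or)
  then have "({..<m} - S) \<times> ({..<n} - T) = ({..<m} - S') \<times> ({..<n} - T')"
    using e xy by simp
  then have "{..<m} - S = {..<m} - S'" "{..<n} - T = {..<n} - T'"
    using ne by (auto simp: times_eq_iff)
  then show "x = y" using x y xy by blast
qed

text \<open>Intersection: the rectangles \<open>S \<times> T\<close>; all pairs with an empty side give \<open>{}\<close>.\<close>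
lemma card_pair_sets_and:
  assumes "A \<subseteq> state_pairs m n" "({}, {}) \<in> A"
  shows "card (pair_set m n (\<and>) ` A) = card (A \<inter> {x. fst x \<noteq> {} \<and> snd x \<noteq> {}}) + 1"
proof (rule card_image_collapse[where z = "{}" and y = "({}, {})"])
  show "finite A" using assms(1) finite_subset by blast
  show "inj_on (pair_set m n (\<and>)) (A \<inter> {x. fst x \<noteq> {} \<and> snd x \<noteq> {}})"
    by (rule inj_on_subset[OF pair_set_and_inj]) (use assms(1) in auto)
  show "\<forall>x\<in>A - {x. fst x \<noteq> {} \<and> snd x \<noteq> {}}. pair_set m n (\<and>) x = {}"
    by (auto simp: pair_set_def)
  show "({}, {}) \<in> A - {x. fst x \<noteq> {} \<and> snd x \<noteq> {}}" using assms(2) by simp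
  show "\<forall>x\<in>A \<inter> {x. fst x \<noteq> {} \<and> snd x \<noteq> {}}. pair_set m n (\<and>) x \<noteq> {}"
    using assms(1) by (auto simp: pair_set_and subset_iff)
qed

lemma card_pair_sets_diff:
  assumes "A \<subseteq> state_pairs m n" "({}, {}) \<in> A"
  shows "card (pair_set m n (\<lambda>x y. x \<and> \<not> y) ` A)
    = card (A \<inter> {x. fst x \<noteq> {} \<and> snd x \<noteq> {..<n}}) + 1"
proof (rule card_image_collapse[where z = "{}" and y = "({}, {})"])
  show "finite A" using assms(1) finite_subset by blast
  show "inj_on (pair_set m n (\<lambda>x y. x \<and> \<not> y)) (A \<inter> {x. fst x \<noteq> {} \<and> snd x \<noteq> {..<n}})"
    by (rule inj_on_subset[OF pair_set_diff_inj]) (use assms(1) in auto)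
  show "\<forall>x\<in>A - {x. fst x \<noteq> {} \<and> snd x \<noteq> {..<n}}. pair_set m n (\<lambda>x y. x \<and> \<not> y) x = {}"
    using assms(1) by (auto simp: pair_set_def)
  show "({}, {}) \<in> A - {x. fst x \<noteq> {} \<and> snd x \<noteq> {..<n}}" using assms(2) by simp
  show "\<forall>x\<in>A \<inter> {x. fst x \<noteq> {} \<and> snd x \<noteq> {..<n}}. pair_set m n (\<lambda>x y. x \<and> \<not> y) x \<noteq> {}"
  proof (intro ballI notI)
    fix x assume x: "x \<in> A \<inter> {x. fst x \<noteq> {} \<and> snd x \<noteq> {..<n}}"
      and e: "pair_set m n (\<lambda>x y. x \<and> \<not> y) x = {}"
    obtain S T where xy: "x = (S, T)" by (cases x)
    have a: "(S, T) \<in> A" "S \<noteq> {}" "T \<noteq> {..<n}" using x xy by auto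
    then have "{..<n} - T \<noteq> {}" using assms(1) by auto
    then show False using e xy a assms(1) by (auto simp: pair_set_diff subset_iff)
  qed
qed

lemma card_pair_sets_or:
  assumes "A \<subseteq> state_pairs m n" "({..<m}, {..<n}) \<in> A"
  shows "card (pair_set m n (\<or>) ` A) = card (A \<inter> {x. fst x \<noteq> {..<m} \<and> snd x \<noteq> {..<n}}) + 1"
proof (rule card_image_collapse[where z = "{..<m} \<times> {..<n}" and y = "({..<m}, {..<n})"])
  show "finite A" using assms(1) finite_subset by blast
  show "inj_on (pair_set m n (\<or>)) (A \<inter> {x. fst x \<noteq> {..<m} \<and> snd x \<noteq> {..<n}})"
    by (rule inj_on_subset[OF pair_set_or_inj]) (use assms(1) in auto)
  show "\<forall>x\<in>A - {x. fst x \<noteq> {..<m} \<and> snd x \<noteq> {..<n}}. pair_set m n (\<or>) x = {..<m} \<times> {..<n}"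
    by (auto simp: pair_set_def)
  show "({..<m}, {..<n}) \<in> A - {x. fst x \<noteq> {..<m} \<and> snd x \<noteq> {..<n}}" using assms(2) by simp
  show "\<forall>x\<in>A \<inter> {x. fst x \<noteq> {..<m} \<and> snd x \<noteq> {..<n}}. pair_set m n (\<or>) x \<noteq> {..<m} \<times> {..<n}"
  proof (intro ballI notI)
    fix x assume x: "x \<in> A \<inter> {x. fst x \<noteq> {..<m} \<and> snd x \<noteq> {..<n}}"
      and e: "pair_set m n (\<or>) x = {..<m} \<times> {..<n}"
    obtain S T where xy: "x = (S, T)" by (cases x)
    have "S \<subseteq> {..<m}" "T \<subseteq> {..<n}" "S \<noteq> {..<m}" "T \<noteq> {..<n}" using x xy assms(1) by auto
    then obtain p q where "p < m" "p \<notin> S" "q < n" "q \<notin> T" by blast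
    then show False using e xy by (auto simp: pair_set_def)
  qed
qed

text \<open>Symmetric difference: complementing both components does not change the pair set,
  and among the pairs with \<open>0 \<in> S\<close> the pair set determines the pair.\<close>
lemma pair_set_xor_complement:
  "S \<subseteq> {..<m} \<Longrightarrow> T \<subseteq> {..<n} \<Longrightarrow>
    pair_set m n (\<noteq>) ({..<m} - S, {..<n} - T) = pair_set m n (\<noteq>) (S, T)"
  by (auto simp: pair_set_def)

lemma pair_set_xor_inj:
  assumes "m \<ge> 1" "n \<ge> 1"
  shows "inj_on (pair_set m n (\<noteq>)) (state_pairs m n \<inter> {x. 0 \<in> fst x})"
proof (rule inj_onI)
  fix x y assume x: "x \<in> state_pairs m n \<inter> {x. 0 \<in> fst x}" and y: "y \<in> state_pairs m n \<inter> {x. 0 \<in> fst x}"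
    and eq: "pair_set m n (\<noteq>) x = pair_set m n (\<noteq>) y"
  obtain S T S' T' where xy: "x = (S, T)" "y = (S', T')" by (cases x, cases y) auto
  have sub: "S \<subseteq> {..<m}" "T \<subseteq> {..<n}" "S' \<subseteq> {..<m}" "T' \<subseteq> {..<n}" "0 \<in> S" "0 \<in> S'"
    using x y unfolding xy by auto
  have mem: "((p \<in> S) \<noteq> (q \<in> T)) = ((p \<in> S') \<noteq> (q \<in> T'))" if pq: "p < m" "q < n" for p q
  proof -
    have "(p, q) \<in> pair_set m n (\<noteq>) (S, T) \<longleftrightarrow> (p, q) \<in> pair_set m n (\<noteq>) (S', T')"
      using eq xy by simp
    then show ?thesis using pq by (simp add: pair_set_def)
  qed
  have "T = T'"
  proof (rule set_eqI)
    fix q show "q \<in> T \<longleftrightarrow> q \<in> T'"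
      using mem[of 0 q] sub assms by (cases "q < n") auto
  qed
  moreover have "S = S'"
  proof (rule set_eqI)
    fix p show "p \<in> S \<longleftrightarrow> p \<in> S'"
      using mem[of p 0] sub assms \<open>T = T'\<close> by (cases "p < m") auto
  qed
  ultimately show "x = y" using xy by simp
qed

lemma card_pair_sets_xor:
  assumes "A \<subseteq> state_pairs m n" "\<And>S T. (S, T) \<in> A \<Longrightarrow> ({..<m} - S, {..<n} - T) \<in> A"
    "m \<ge> 1" "n \<ge> 1"
  shows "card (pair_set m n (\<noteq>) ` A) = card (A \<inter> {x. 0 \<in> fst x})"
proof -
  have "pair_set m n (\<noteq>) ` A = pair_set m n (\<noteq>) ` (A \<inter> {x. 0 \<in> fst x})"
  proof (intro set_eqI iffI)
    fix Z assume "Z \<in> pair_set m n (\<noteq>) ` A"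
    then obtain S T where st: "(S, T) \<in> A" "Z = pair_set m n (\<noteq>) (S, T)" by auto
    have sub: "S \<subseteq> {..<m}" "T \<subseteq> {..<n}" using st assms(1) by auto
    show "Z \<in> pair_set m n (\<noteq>) ` (A \<inter> {x. 0 \<in> fst x})"
    proof (cases "0 \<in> S")
      case True then show ?thesis using st by auto
    next
      case False
      then have "({..<m} - S, {..<n} - T) \<in> A \<inter> {x. 0 \<in> fst x}" using assms st by auto
      then show ?thesis using st pair_set_xor_complement[OF sub] by (metis image_eqI)
    qed
  qed auto
  moreover have "inj_on (pair_set m n (\<noteq>)) (A \<inter> {x. 0 \<in> fst x})"
    by (rule inj_on_subset[OF pair_set_xor_inj[OF assms(3,4)]]) (use assms(1) in auto)
  ultimately show ?thesis by (simp add: card_image)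
qed

lemma card_pairs_avoiding:
  assumes "finite M" "finite N" "X \<subseteq> M" "Y \<subseteq> N"
  shows "card (Pow M \<times> Pow N \<inter> {x. fst x \<noteq> X \<and> snd x \<noteq> Y}) = (2 ^ card M - 1) * (2 ^ card N - 1)"
proof -
  have "Pow M \<times> Pow N \<inter> {x. fst x \<noteq> X \<and> snd x \<noteq> Y} = (Pow M - {X}) \<times> (Pow N - {Y})"
    by auto
  then show ?thesis using assms by (simp add: card_cartesian_product card_Diff_singleton card_Pow)
qed

lemma card_subsets_containing:
  assumes "finite M" "z \<in> M"
  shows "card {S \<in> Pow M. z \<in> S} = 2 ^ (card M - 1)"
proof -
  have "{S \<in> Pow M. z \<in> S} = insert z ` Pow (M - {z})"
  proof (intro set_eqI iffI)
    fix S assume "S \<in> {S \<in> Pow M. z \<in> S}"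
    then have "S = insert z (S - {z})" "S - {z} \<in> Pow (M - {z})" by auto
    then show "S \<in> insert z ` Pow (M - {z})" by (metis imageI)
  qed (use assms(2) in auto)
  moreover have "inj_on (insert z) (Pow (M - {z}))"
    by (rule inj_onI) (metis Diff_insert_absorb PowD subset_Diff_insert)
  ultimately show ?thesis using assms by (simp add: card_image card_Pow card_Diff_singleton)
qed

lemma card_pairs_containing:
  assumes "finite M" "finite N" "z \<in> M"
  shows "card (Pow M \<times> Pow N \<inter> {x. z \<in> fst x}) = 2 ^ (card M - 1) * 2 ^ card N"
proof -
  have "Pow M \<times> Pow N \<inter> {x. z \<in> fst x} = {S \<in> Pow M. z \<in> S} \<times> Pow N" by auto
  then show ?thesis using assms card_subsets_containing by (simp add: card_cartesian_product card_Pow)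
qed

section \<open>The case \<open>(m, n) \<noteq> (4, 4)\<close>\<close>

lemma set_ops_as_bool_combs:
  "K \<union> L = {w. (w \<in> K) \<or> (w \<in> L)}" "K \<inter> L = {w. (w \<in> K) \<and> (w \<in> L)}"
  "K - L = {w. (w \<in> K) \<and> \<not> (w \<in> L)}" "symdiff K L = {w. (w \<in> K) \<noteq> (w \<in> L)}"
  by (auto simp: symdiff_def)

theorem sc_not_4_4:
  assumes "m \<ge> 3" "n \<ge> 3" "(m, n) \<noteq> (4, 4)"
  defines "K \<equiv> reversal (U m La Lb Lc)" and "L \<equiv> reversal (U n Lb La Lc)"
  shows "sc (K \<union> L) = (2^m - 1) * (2^n - 1) + 1 \<and>
       sc (K \<inter> L) = (2^m - 1) * (2^n - 1) + 1 \<and>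
       sc (K - L) = (2^m - 1) * (2^n - 1) + 1 \<and>
       sc (symdiff K L) = 2^(m + n - 1)"
proof -
  interpret not_4_4 m n La Lb Lc
    using assms by unfold_locales (auto simp: distinct3_def)
  have sc: "sc {w. op (w \<in> K) (w \<in> L)} = card (pair_set m n op ` state_pairs m n)" for op
    using sc_bool_comb[OF m2 n2 connected] reach_pairs_all unfolding K_def L_def by simp
  have fin: "finite {..<m}" "finite {..<n}" by auto
  have "card (pair_set m n (\<or>) ` state_pairs m n) = (2^m - 1) * (2^n - 1) + 1"
    using card_pair_sets_or[of "state_pairs m n"] card_pairs_avoiding[OF fin] by simp
  moreover have "card (pair_set m n (\<and>) ` state_pairs m n) = (2^m - 1) * (2^n - 1) + 1"
    using card_pair_sets_and[of "state_pairs m n"] card_pairs_avoiding[OF fin] by simp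
  moreover have "card (pair_set m n (\<lambda>x y. x \<and> \<not> y) ` state_pairs m n) = (2^m - 1) * (2^n - 1) + 1"
    using card_pair_sets_diff[of "state_pairs m n"] card_pairs_avoiding[OF fin] by simp
  moreover have "card (pair_set m n (\<noteq>) ` state_pairs m n) = 2 ^ (m - 1) * 2 ^ n"
    using card_pair_sets_xor[of "state_pairs m n"] card_pairs_containing[OF fin, of 0] assms(1,2)
    by auto
  moreover have "2 ^ (m - 1) * 2 ^ n = (2::nat) ^ (m + n - 1)"
    using assms(1) by (simp add: power_add[symmetric])
  ultimately show ?thesis
    unfolding set_ops_as_bool_combs
    using sc[of "(\<or>)"] sc[of "(\<and>)"] sc[of "\<lambda>x y. x \<and> \<not> y"] sc[of "(\<noteq>)"] by simp
qed

section \<open>The case \<open>m = n = 4\<close>\<close>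

text \<open>We encode a set \<open>S \<subseteq> {..<4}\<close> by
  its characteristic list of length 4 and decide everything by evaluation over the 256 codes.\<close>

definition enc :: "nat set \<Rightarrow> bool list" where
  "enc S = map (\<lambda>i. i \<in> S) [0..<4]"

definition enc_pair :: "nat set \<times> nat set \<Rightarrow> bool list \<times> bool list" where
  "enc_pair x = (enc (fst x), enc (snd x))"

definition codes44 :: "(bool list \<times> bool list) list" where
  "codes44 = List.product (List.n_lists 4 [False, True]) (List.n_lists 4 [False, True])"

text \<open>One letter of the reversed subset automata, on codes.\<close>
definition step44 :: "letter \<Rightarrow> bool list \<times> bool list \<Rightarrow> bool list \<times> bool list" where
  "step44 x p = (map (\<lambda>q. fst p ! U_delta 4 La Lb Lc q x) [0..<4],
                 map (\<lambda>q. snd p ! U_delta 4 Lb La Lc q x) [0..<4])"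

definition run44 :: "letter list \<Rightarrow> bool list \<times> bool list" where
  "run44 u = foldl (\<lambda>p x. step44 x p) ([False, False, False, True], [False, False, False, True]) u"

text \<open>A 2-subset of \<open>{0,1,2,3}\<close> lies in one of the three perfect matchings
  \<open>{01, 23}\<close>, \<open>{02, 13}\<close>, \<open>{03, 12}\<close>; we number these 1, 2, 3.\<close>
definition matching_class :: "bool list \<Rightarrow> nat" where
  "matching_class s = (if s ! 0 = s ! 1 then 1 else if s ! 0 = s ! 2 then 2 else 3)"

text \<open>The unreachable codes: two 2-sets whose matchings are not related by \<open>1 \<leftrightarrow> 2, 3 \<leftrightarrow> 3\<close>.\<close>
definition blocked44 :: "bool list \<times> bool list \<Rightarrow> bool" where
  "blocked44 p \<longleftrightarrow> length (filter id (fst p)) = 2 \<and> length (filter id (snd p)) = 2 \<and>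
     (matching_class (fst p), matching_class (snd p)) \<notin> {(1, 2), (2, 1), (3, 3)}"

definition unreachable44 :: "(nat set \<times> nat set) set" where
  "unreachable44 = {x \<in> state_pairs 4 4. blocked44 (enc_pair x)}"

text \<open>For each code (in the order of \<open>codes44\<close>), a word reaching it, if it is not blocked.\<close>
definition witnesses44 :: "letter list list" where
  "witnesses44 = [
    [Lc], [Lb, Lb, Lc, La], [Lb, Lb, Lc], [Lb, Lb, Lb, Lc, Lb, Lb, Lb],
    [Lb, Lc], [Lb, Lb, Lb, Lc, La, Lb], [Lb, Lb, Lb, Lc, Lb, Lb], [Lb, Lb, Lb, Lc, La, Lb, Lc, La, Lb],
    [Lb, Lb, Lc, La, Lb], [Lb, Lb, Lb, Lc], [Lb, Lb, Lb, Lc, La], [Lb, Lb, Lb, Lc, Lb, Lb, Lb, Lc],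
    [Lb, Lb, Lb, Lc, Lb], [Lb, Lb, Lb, Lc, La, Lb, Lc], [Lb, Lb, Lb, Lc, La, Lb, Lc, La], [Lb, Lb, Lb, Lc, La, Lb, Lc, La, Lb, Lc],
    [La, La, Lc, La], [La, La, Lb, Lb, La], [La, Lb, La, Lb], [La, Lb, Lb, La, Lc, Lb, Lb, Lb],
    [La, La, Lb], [Lb, Lb, La, Lc, La, Lb], [Lb, Lb, La, Lc, Lb, La, Lb], [La, La, Lb, Lb, La, Lc, La, Lb, Lc, La, Lb],
    [La, La, La], [Lb, Lb, La, Lc, La, La], [La, Lb, Lb, La, Lc, La], [Lb, Lb, La, Lc, Lb, La, Lb, Lb, Lc, La],
    [La, Lb, Lb, La, Lc, Lb], [Lb, Lb, La, Lc, Lb, La, Lb, Lb, Lc, Lb], [La, Lb, Lb, La, Lc, La, Lb, Lc, La], [La, Lb, Lb, La, Lc, La, Lb, Lc, La, Lb, Lc, La],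
    [La, La, Lc], [La, Lb, Lb, La], [La, La, Lb, Lb], [Lb, Lb, La, Lc, Lb, La, Lb, Lb],
    [La, Lb, La], [La, Lb, Lb, La, Lc, La, Lb], [La, Lb, Lb, La, Lc, Lb, Lb], [La, Lb, Lb, La, Lc, La, Lb, Lc, La, Lb],
    [La, La], [La, Lb, Lb, La, Lc], [Lb, Lb, La, Lc, La], [Lb, Lb, La, Lc, Lb, La, Lb, Lb, Lc],
    [Lb, Lb, La, Lc, Lb, La], [La, Lb, Lb, La, Lc, La, Lb, Lc], [La, La, Lb, Lb, La, Lc, La, Lb, Lc, La], [La, Lb, Lb, La, Lc, La, Lb, Lc, La, Lb, Lc],
    [La, La, La, Lc, La, La, La], [La, Lb, La, Lb, Lc, La, La, La], [La, La, Lb, Lc, La, La, La, Lb], [],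
    [La, La, Lb, Lc, La, La, La], [La, La, Lb, Lb, La, Lc, La, La, La, Lb], [], [Lb, Lb, La, Lc, La, Lb, Lc, La, La, La, Lb],
    [La, La, Lb, Lc, Lb, La, Lb, La], [], [La, La, Lb, Lb, La, Lc, La, La, La], [La, La, Lb, Lc, Lb, La, Lc, Lb, Lb, Lb, Lc, La],
    [], [Lb, Lb, La, Lc, La, Lb, Lc, Lb, La, Lb, La], [Lb, Lb, La, Lc, La, Lb, Lc, La, La, La], [Lb, Lb, La, Lc, La, Lb, Lc, La, Lb, La, Lc, La],
    [La, Lc], [Lb, Lb, La], [La, Lb, Lb], [Lb, Lb, La, Lc, Lb, Lb, Lb],
    [La, Lb], [Lb, Lb, La, Lc, La, Lb, La, La], [Lb, Lb, La, Lc, Lb, Lb], [La, La, Lb, Lb, La, Lc, La, Lb, Lc, Lb, Lb],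
    [La], [Lb, Lb, La, Lc], [La, Lb, Lb, La, Lc, La, La, La], [Lb, Lb, La, Lc, Lb, Lb, Lb, Lc],
    [Lb, Lb, La, Lc, Lb], [La, La, Lb, Lb, La, Lc, La, Lb, Lc], [La, La, Lb, Lb, La, Lc, La, Lb, Lc, Lb], [Lb, Lb, La, Lc, La, Lb, Lc, La, Lb, Lc],
    [La, La, La, Lc, Lb, La], [La, La, Lb, Lc, Lb, La], [La, La, Lb, Lc, La, La, Lb], [La, La, Lb, Lb, La, Lc, La, Lb, La, Lb],
    [La, La, Lb, Lc, Lb, La, Lb, Lb], [], [], [Lb, Lb, La, Lc, La, Lb, Lc, Lb, La, Lb, Lb],
    [La, La, Lb, Lc, La, Lb, La, Lb], [], [], [Lb, Lb, La, Lc, La, Lb, Lc, La, Lb, La, Lb],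
    [La, La, Lb, Lb, La, Lc, Lb, La], [Lb, Lb, La, Lc, La, Lb, Lc, Lb, La], [Lb, Lb, La, Lc, La, Lb, Lc, La, La, Lb], [Lb, Lb, La, Lc, La, Lb, Lc, La, Lb, La, Lc, Lb],
    [La, La, La, Lc, La, La], [La, La, Lb, Lc, La, Lb, La], [La, Lb, La, Lb, Lc, La, La], [],
    [La, La, Lb, Lc, La, La], [], [La, La, Lb, Lb, La, Lc, La, Lb, La], [Lb, Lb, La, Lc, La, Lb, Lc, La, Lb, La],
    [La, La, Lb, Lc, Lb, La, Lb], [La, La, Lb, Lb, La, Lc, La, La], [], [La, La, Lb, Lc, Lb, La, Lc, Lb, Lb, Lb, Lc],
    [], [Lb, Lb, La, Lc, La, Lb, Lc, La, La], [Lb, Lb, La, Lc, La, Lb, Lc, Lb, La, Lb], [Lb, Lb, La, Lc, La, Lb, Lc, La, Lb, La, Lc],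
    [La, La, La, Lc, Lb, La, Lc, La, La], [La, La, Lb, Lb, La, Lc, Lb, La, Lc, Lb, La], [La, La, Lb, Lc, La, La, Lb, Lc, La, La], [La, La, Lb, Lc, Lb, La, Lc, Lb, La, Lb, Lb],
    [La, La, Lb, Lb, La, Lc, Lb, La, Lc, La, La], [La, La, Lb, Lc, Lb, La, Lc, La, Lb, La, La], [La, La, Lb, Lc, Lb, La, Lc, Lb, La, Lb], [La, La, Lb, Lb, La, Lc, La, La, La, Lb, Lc, La, Lb, La],
    [La, La, Lb, Lb, La, Lc, Lb, La, Lc, Lb, La, Lb], [La, La, Lb, Lc, Lb, La, Lc, La, La], [La, La, Lb, Lc, Lb, La, Lc, La, Lb, La, La, Lb], [La, La, Lb, Lb, La, Lc, La, Lb, La, Lb, Lc, La, La],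
    [La, La, Lb, Lc, Lb, La, Lc, Lb, La], [La, La, Lb, Lc, Lb, La, Lc, La, Lb, Lc, La, La], [La, La, Lb, Lb, La, Lc, La, Lb, La, Lb, Lc, Lb, La], [Lb, Lb, La, Lc, La, Lb, Lc, Lb, La, Lb, Lb, Lc, La, La],
    [La, La, Lc, La, La], [Lb, Lb, Lb], [Lb, Lb], [Lb, Lb, La, Lc, La, Lb, La, Lb],
    [Lb], [Lb, Lb, La, Lc, La, La, La, Lb], [Lb, Lb, La, Lc, La, Lb, La], [La, La, Lb, Lb, La, Lc, La, Lb, Lc, La, Lb, La],
    [], [La, Lb, Lb, La, Lc, La, La], [Lb, Lb, La, Lc, La, La, La], [Lb, Lb, La, Lc, Lb, La, Lb, Lb, Lc, La, La],
    [La, Lb, Lb, La, Lc, Lb, La], [La, Lb, Lb, La, Lc, La, Lb, Lc, La, La], [La, Lb, Lb, La, Lc, La, Lb, Lc, La, La, Lb], [La, Lb, Lb, La, Lc, La, Lb, Lc, La, Lb, Lc, La, La],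
    [La, La, La, Lc], [La, La, Lb, Lc, Lb, Lb], [La, Lb, La, Lb, Lc], [],
    [La, La, Lb, Lc], [], [La, La, Lb, Lb, La, Lc, Lb, Lb], [Lb, Lb, La, Lc, La, Lb, Lc, Lb, Lb],
    [La, Lb, La, Lb, Lc, Lb, Lb], [La, La, Lb, Lb, La, Lc], [], [La, Lb, Lb, La, Lc, Lb, Lb, Lb, Lc],
    [], [Lb, Lb, La, Lc, La, Lb, Lc], [La, Lb, Lb, La, Lc, Lb, Lb, Lb, Lc, Lb, Lb], [Lb, Lb, La, Lc, La, Lb, Lc, Lb, Lb, Lc],
    [La, La, La, Lc, Lb], [La, Lb, La, Lb, Lc, Lb], [La, La, Lb, Lc, Lb], [La, La, Lb, Lb, La, Lc, Lb, Lb, Lb],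
    [La, Lb, La, Lb, Lc, Lb, Lb, Lb], [], [], [La, Lb, Lb, La, Lc, Lb, Lb, Lb, Lc, Lb, Lb, Lb],
    [La, La, Lb, Lc, Lb, Lb, Lb], [], [], [Lb, Lb, La, Lc, La, Lb, Lc, Lb, Lb, Lb],
    [La, La, Lb, Lb, La, Lc, Lb], [La, Lb, Lb, La, Lc, Lb, Lb, Lb, Lc, Lb], [Lb, Lb, La, Lc, La, Lb, Lc, Lb], [Lb, Lb, La, Lc, La, Lb, Lc, Lb, Lb, Lc, Lb],
    [La, La, La, Lc, La, La, La, Lc], [La, La, Lb, Lc, La, La, La, Lb, Lc, Lb], [La, La, Lb, Lc, La, La, La, Lb, Lc], [La, La, Lb, Lc, Lb, La, Lc, Lb, La, La, Lb, Lb],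
    [La, La, Lb, Lc, La, La, La, Lc], [La, La, Lb, Lc, Lb, La, Lc, La, La, La, Lb], [La, La, Lb, Lc, Lb, La, Lc, Lb, La, La, Lb], [La, La, Lb, Lb, La, Lc, La, La, La, Lb, Lc, Lb, Lb],
    [La, La, Lb, Lc, La, La, La, Lb, Lc, Lb, Lb], [La, Lb, La, Lb, Lc, La, La, La, Lc], [La, La, Lb, Lc, Lb, La, Lc, La, La, La], [La, La, Lb, Lc, Lb, La, Lc, Lb, La, La, Lb, Lb, Lc],
    [La, La, Lb, Lc, Lb, La, Lc, Lb, La, La], [La, La, Lb, Lb, La, Lc, La, La, La, Lb, Lc], [La, La, Lb, Lb, La, Lc, La, La, La, Lb, Lc, Lb], [Lb, Lb, La, Lc, La, Lb, Lc, La, La, La, Lb, Lc],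
    [La, La, La, Lc, La], [La, Lb, La, Lb, Lc, La], [La, La, Lb, Lc, La, Lb], [],
    [La, La, Lb, Lc, La], [La, La, Lb, Lb, La, Lc, La, Lb], [], [Lb, Lb, La, Lc, La, Lb, Lc, La, Lb],
    [La, Lb, La, Lb, Lc, La, Lb], [], [La, La, Lb, Lb, La, Lc, La], [La, Lb, Lb, La, Lc, Lb, Lb, Lb, Lc, La],
    [], [La, Lb, Lb, La, Lc, Lb, Lb, Lb, Lc, La, Lb], [Lb, Lb, La, Lc, La, Lb, Lc, La], [Lb, Lb, La, Lc, La, Lb, Lc, Lb, Lb, Lc, La],
    [La, La, La, Lc, Lb, La, Lc], [La, La, Lb, Lc, La, La, La, Lb, Lc, La], [La, La, Lb, Lc, La, La, Lb, Lc], [La, La, Lb, Lc, Lb, La, Lc, La, Lb, La, Lb],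
    [La, La, Lb, Lb, La, Lc, Lb, La, Lc], [La, La, Lb, Lc, Lb, La, Lc, La, Lb], [La, La, Lb, Lc, Lb, La, Lc, Lb, Lb], [La, La, Lb, Lc, Lb, La, Lc, La, Lb, Lc, La, Lb],
    [La, La, Lb, Lc, La, La, Lb, Lc, La, Lb], [La, La, Lb, Lc, Lb, La, Lc], [La, Lb, La, Lb, Lc, La, La, La, Lc, La], [La, La, Lb, Lb, La, Lc, La, Lb, La, Lb, Lc],
    [La, La, Lb, Lc, Lb, La, Lc, Lb, La, La, La], [La, La, Lb, Lc, Lb, La, Lc, La, Lb, Lc], [La, La, Lb, Lb, La, Lc, La, La, La, Lb, Lc, La], [Lb, Lb, La, Lc, La, Lb, Lc, Lb, La, Lb, Lb, Lc],
    [La, La, La, Lc, Lb, La, Lc, La], [La, La, Lb, Lc, La, La, Lb, Lc, La], [La, La, Lb, Lb, La, Lc, Lb, La, Lc, Lb], [La, La, Lb, Lc, Lb, La, Lc, Lb, Lb, Lb],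
    [La, La, Lb, Lb, La, Lc, Lb, La, Lc, La], [La, La, Lb, Lc, Lb, La, Lc, Lb, Lb, La], [La, La, Lb, Lc, Lb, La, Lc, La, Lb, La], [La, La, Lb, Lb, La, Lc, La, La, La, Lb, Lc, La, Lb],
    [La, La, Lb, Lc, La, La, La, Lb, Lc, La, Lb], [La, Lb, La, Lb, Lc, La, La, La, Lc, La, La], [La, La, Lb, Lc, Lb, La, Lc, La], [La, La, Lb, Lb, La, Lc, La, Lb, La, Lb, Lc, La],
    [La, La, Lb, Lc, Lb, La, Lc, Lb], [La, La, Lb, Lb, La, Lc, La, Lb, La, Lb, Lc, Lb], [La, La, Lb, Lc, Lb, La, Lc, La, Lb, Lc, La], [Lb, Lb, La, Lc, La, Lb, Lc, Lb, La, Lb, Lb, Lc, La],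
    [La, La, La, Lc, Lb, La, Lc, La, La, Lc], [La, La, Lb, Lc, La, La, Lb, Lc, La, La, Lc, La], [La, La, Lb, Lc, La, La, Lb, Lc, La, La, Lc], [La, La, Lb, Lc, Lb, La, Lc, Lb, La, Lb, Lc, Lb],
    [La, La, Lb, Lc, Lb, La, Lc, Lb, La, Lc], [La, La, Lb, Lc, Lb, La, Lc, La, La, Lc, La, Lb], [La, La, Lb, Lc, Lb, La, Lc, Lb, La, Lb, Lc], [La, La, Lb, Lc, Lb, La, Lc, La, Lb, La, La, Lc, La, Lb],
    [La, La, Lb, Lc, La, La, Lb, Lc, La, La, Lc, La, Lb], [La, La, Lb, Lc, Lb, La, Lc, La, La, Lc], [La, La, Lb, Lc, Lb, La, Lc, La, La, Lc, La], [La, La, Lb, Lc, Lb, La, Lc, Lb, La, Lb, Lb, Lc],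
    [La, La, Lb, Lc, Lb, La, Lc, La, La, Lc, Lb], [La, La, Lb, Lc, Lb, La, Lc, La, Lb, La, La, Lc], [La, La, Lb, Lc, Lb, La, Lc, La, Lb, La, La, Lc, La], [La, La, Lb, Lb, La, Lc, La, La, La, Lb, Lc, La, Lb, La, Lc]]"

text \<open>For each pair of states \<open>(p, q)\<close>, a word reaching \<open>p\<close> in \<open>\<U>_4(a,b,c)\<close> and \<open>q\<close> in
  \<open>\<U>_4(b,a,c)\<close>.\<close>
definition state_witnesses44 :: "letter list list list" where
  "state_witnesses44 = [[[], [La, La, La, Lc], [La, Lb], [La, Lb, La, Lb]],
    [[La, Lb, Lb, Lc], [La], [La, Lb, La], [La, Lb, Lb]],
    [[La, La], [La, La, Lb], [La, La, Lb, Lb], [La, Lb, Lb, La]],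
    [[La, La, Lb, La], [La, La, La], [La, La, La, Lb], [La, La, La, Lb, Lb]]]"

lemma blocked44_closed:
  "list_all (\<lambda>p. blocked44 p \<or> list_all (\<lambda>x. \<not> blocked44 (step44 x p)) [La, Lb, Lc]) codes44"
  by code_simp

lemma witnesses44_reach: "list_all2 (\<lambda>p w. blocked44 p \<or> run44 w = p) codes44 witnesses44"
  by code_simp

lemma blocked44_complement:
  "list_all (\<lambda>p. blocked44 p = blocked44 (map Not (fst p), map Not (snd p))) codes44"
  by code_simp

lemma blocked44_counts:
  "length (filter blocked44 codes44) = 24"
  "length (filter (\<lambda>p. blocked44 p \<and> fst p ! 0) codes44) = 12"
  by code_simp+

lemma state_witnesses44_reach:
  "list_all (\<lambda>p. list_all (\<lambda>q. run 4 La Lb Lc (state_witnesses44 ! p ! q) 0 = p \<and>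
                               run 4 Lb La Lc (state_witnesses44 ! p ! q) 0 = q) [0..<4]) [0..<4]"
  by code_simp

lemma upt_0_4: "[0..<4] = [0, 1, 2, 3::nat]"
  by (simp add: upt_rec)

lemma enc_nth: "i < 4 \<Longrightarrow> enc S ! i = (i \<in> S)"
  by (simp add: enc_def)

lemma enc_inj: "S \<subseteq> {..<4} \<Longrightarrow> S' \<subseteq> {..<4} \<Longrightarrow> enc S = enc S' \<Longrightarrow> S = S'"
  by (rule set_eqI) (metis enc_nth lessThan_iff subsetD)

lemma enc_pair_inj: "inj_on enc_pair (state_pairs 4 4)"
proof (rule inj_onI)
  fix x y assume "x \<in> state_pairs 4 4" "y \<in> state_pairs 4 4" "enc_pair x = enc_pair y"
  then have "fst x = fst y" "snd x = snd y"
    using enc_inj[of "fst x" "fst y"] enc_inj[of "snd x" "snd y"] by (auto simp: enc_pair_def)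
  then show "x = y" by (simp add: prod_eq_iff)
qed

lemma enc_surj: "length xs = 4 \<Longrightarrow> enc {i. i < 4 \<and> xs ! i} = xs"
  by (rule nth_equalityI) (auto simp: enc_def)

lemma enc_complement: "enc ({..<4} - S) = map Not (enc S)"
  by (simp add: enc_def)

lemma set_codes44: "set codes44 = {p. length (fst p) = 4 \<and> length (snd p) = 4}"
  by (auto simp: codes44_def set_n_lists)

lemma distinct_codes44: "distinct codes44"
  by (simp add: codes44_def distinct_product distinct_n_lists)

lemma card_by_codes:
  assumes "\<And>x. x \<in> state_pairs 4 4 \<Longrightarrow> g x = g' (enc_pair x)"
  shows "card {x \<in> state_pairs 4 4. g x} = length (filter g' codes44)"
proof -
  have "enc_pair ` {x \<in> state_pairs 4 4. g x} = set (filter g' codes44)"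
  proof (intro set_eqI iffI)
    fix p assume "p \<in> enc_pair ` {x \<in> state_pairs 4 4. g x}"
    then show "p \<in> set (filter g' codes44)"
      using assms by (auto simp: set_codes44 enc_pair_def enc_def)
  next
    fix p assume "p \<in> set (filter g' codes44)"
    then have p: "length (fst p) = 4" "length (snd p) = 4" "g' p" by (auto simp: set_codes44)
    define x where "x = ({i. i < 4 \<and> fst p ! i}, {i. i < 4 \<and> snd p ! i})"
    have x: "x \<in> state_pairs 4 4" "enc_pair x = p"
      using p enc_surj by (auto simp: x_def enc_pair_def)
    then have "x \<in> {x \<in> state_pairs 4 4. g x}" using assms p by simp
    then show "p \<in> enc_pair ` {x \<in> state_pairs 4 4. g x}" using x(2)[symmetric] by (rule rev_image_eqI)
  qed
  moreover have "inj_on enc_pair {x \<in> state_pairs 4 4. g x}"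
    by (rule inj_on_subset[OF enc_pair_inj]) auto
  ultimately have "card {x \<in> state_pairs 4 4. g x} = card (set (filter g' codes44))"
    using card_image by fastforce
  also have "\<dots> = length (filter g' codes44)"
    by (rule distinct_card[OF distinct_filter[OF distinct_codes44]])
  finally show ?thesis .
qed

lemma rstate_snoc:
  "k \<ge> 2 \<Longrightarrow> rstate k a b c (u @ [x]) = {q. q < k \<and> U_delta k a b c q x \<in> rstate k a b c u}"
  using U_delta_lt by (auto simp: rstate_def run_Cons)

lemma run44_eq: "run44 u = enc_pair (rstate 4 La Lb Lc u, rstate 4 Lb La Lc u)"
proof (induction u rule: rev_induct)
  case Nil
  have "rstate 4 a b c [] = {3}" for a b c by (auto simp: rstate_def)
  then show ?case by (simp add: run44_def enc_pair_def enc_def upt_0_4)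
next
  case (snoc x u)
  have lt: "U_delta 4 a b c q x < 4" if "q < 4" for a b c q using U_delta_lt[of 4 q] that by simp
  have e: "enc (rstate 4 a b c (u @ [x])) = map (\<lambda>q. enc (rstate 4 a b c u) ! U_delta 4 a b c q x) [0..<4]"
    for a b c by (simp add: rstate_snoc enc_def enc_nth lt)
  have "run44 (u @ [x]) = step44 x (run44 u)" by (simp add: run44_def)
  then show ?case using snoc by (simp add: step44_def enc_pair_def e)
qed

lemma run44_not_blocked: "\<not> blocked44 (run44 u)"
proof (induction u rule: rev_induct)
  case Nil then show ?case by (simp add: run44_def blocked44_def)
next
  case (snoc x u)
  have "run44 (u @ [x]) = step44 x (run44 u)" by (simp add: run44_def)
  moreover have "run44 u \<in> set codes44" by (simp add: run44_eq enc_pair_def enc_def set_codes44)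
  moreover have "x \<in> set [La, Lb, Lc]" by (cases x) auto
  ultimately show ?case using blocked44_closed snoc by (auto simp: list_all_iff)
qed

theorem reach_pairs_4_4: "reach_pairs 4 4 La Lb Lc = state_pairs 4 4 - unreachable44"
proof (intro set_eqI iffI)
  fix x assume "x \<in> reach_pairs 4 4 La Lb Lc"
  then obtain u where x: "x = (rstate 4 La Lb Lc u, rstate 4 Lb La Lc u)"
    unfolding reach_pairs_def by blast
  then show "x \<in> state_pairs 4 4 - unreachable44"
    using run44_not_blocked[of u] by (auto simp: unreachable44_def run44_eq rstate_def)
next
  fix x assume x: "x \<in> state_pairs 4 4 - unreachable44"
  then have "enc_pair x \<in> set codes44" by (simp add: set_codes44 enc_pair_def enc_def)
  then obtain i where i: "i < length codes44" "codes44 ! i = enc_pair x"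
    by (metis in_set_conv_nth)
  have "blocked44 (codes44 ! i) \<or> run44 (witnesses44 ! i) = codes44 ! i"
    using witnesses44_reach i(1) by (rule list_all2_nthD)
  then have "enc_pair (rstate 4 La Lb Lc (witnesses44 ! i), rstate 4 Lb La Lc (witnesses44 ! i))
      = enc_pair x"
    using i x by (simp add: run44_eq unreachable44_def)
  moreover have "(rstate 4 La Lb Lc (witnesses44 ! i), rstate 4 Lb La Lc (witnesses44 ! i))
      \<in> state_pairs 4 4"
    by (auto simp: rstate_def)
  ultimately have "(rstate 4 La Lb Lc (witnesses44 ! i), rstate 4 Lb La Lc (witnesses44 ! i)) = x"
    by (rule inj_onD[OF enc_pair_inj]) (use x in blast)
  then show "x \<in> reach_pairs 4 4 La Lb Lc" unfolding reach_pairs_def by (rule range_eqI[OF sym])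
qed

lemma connected_4_4: "pairs_connected 4 4 La Lb Lc"
  unfolding pairs_connected_def
proof (intro allI impI)
  fix p q :: nat assume "p < 4" "q < 4"
  then have "run 4 La Lb Lc (state_witnesses44 ! p ! q) 0 = p \<and>
      run 4 Lb La Lc (state_witnesses44 ! p ! q) 0 = q"
    using state_witnesses44_reach by (auto simp: list_all_iff)
  then show "\<exists>w. run 4 La Lb Lc w 0 = p \<and> run 4 Lb La Lc w 0 = q" by blast
qed

text \<open>Blocked codes have two elements on each side, so neither side is empty or full.\<close>
lemma unreachable44_sides:
  assumes "x \<in> unreachable44"
  shows "fst x \<noteq> {}" "snd x \<noteq> {}" "fst x \<noteq> {..<4}" "snd x \<noteq> {..<4}"
proof -
  have enc: "enc {} = [False, False, False, False]" "enc {..<4} = [True, True, True, True]"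
    by (simp_all add: enc_def upt_0_4)
  have not_blocked: "\<not> blocked44 ([v, v, v, v], t)" "\<not> blocked44 (s, [v, v, v, v])" for v s t
    by (simp_all add: blocked44_def)
  have "blocked44 (enc (fst x), enc (snd x))"
    using assms by (simp add: unreachable44_def enc_pair_def)
  then show "fst x \<noteq> {}" "snd x \<noteq> {}" "fst x \<noteq> {..<4}" "snd x \<noteq> {..<4}"
    using enc not_blocked by auto
qed

lemma card_unreachable44: "card unreachable44 = 24"
proof -
  have "card unreachable44 = length (filter blocked44 codes44)"
    unfolding unreachable44_def by (rule card_by_codes) simp
  then show ?thesis using blocked44_counts(1) by simp
qed

lemma card_unreachable44_containing_0: "card (unreachable44 \<inter> {x. 0 \<in> fst x}) = 12"
proof -
  have "unreachable44 \<inter> {x. 0 \<in> fst x} = {x \<in> state_pairs 4 4. blocked44 (enc_pair x) \<and> 0 \<in> fst x}"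
    by (auto simp: unreachable44_def)
  also have "card \<dots> = length (filter (\<lambda>p. blocked44 p \<and> fst p ! 0) codes44)"
    by (rule card_by_codes) (simp add: enc_pair_def enc_nth)
  finally show ?thesis using blocked44_counts(2) by simp
qed

lemma finite_unreachable44: "finite unreachable44"
  by (rule finite_subset[of _ "state_pairs 4 4"]) (auto simp: unreachable44_def)

lemma card_minus_unreachable44:
  assumes "\<And>x. x \<in> unreachable44 \<Longrightarrow> P x"
  shows "card ((state_pairs 4 4 - unreachable44) \<inter> {x. P x}) = card (state_pairs 4 4 \<inter> {x. P x}) - 24"
proof -
  have "(state_pairs 4 4 - unreachable44) \<inter> {x. P x} = state_pairs 4 4 \<inter> {x. P x} - unreachable44"
    by auto
  moreover have "unreachable44 \<subseteq> state_pairs 4 4 \<inter> {x. P x}"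
    using assms by (auto simp: unreachable44_def)
  ultimately show ?thesis
    using card_unreachable44 finite_unreachable44 by (simp add: card_Diff_subset)
qed

text \<open>Avoiding an empty or full first and second component leaves \<open>15 \<cdot> 15 - 24\<close> pairs.\<close>
lemma card_reach44_avoiding:
  assumes "X = {} \<or> X = {..<4}" "Y = {} \<or> Y = {..<4}"
  shows "card ((state_pairs 4 4 - unreachable44) \<inter> {x. fst x \<noteq> X \<and> snd x \<noteq> Y}) = 201"
proof -
  have "\<And>x. x \<in> unreachable44 \<Longrightarrow> fst x \<noteq> X \<and> snd x \<noteq> Y"
    using assms unreachable44_sides by blast
  then have "card ((state_pairs 4 4 - unreachable44) \<inter> {x. fst x \<noteq> X \<and> snd x \<noteq> Y})
      = card (state_pairs 4 4 \<inter> {x. fst x \<noteq> X \<and> snd x \<noteq> Y}) - 24"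
    by (rule card_minus_unreachable44)
  moreover have "card (state_pairs 4 4 \<inter> {x. fst x \<noteq> X \<and> snd x \<noteq> Y}) = 225"
    using card_pairs_avoiding[of "{..<4::nat}" "{..<4::nat}" X Y] assms by auto
  ultimately show ?thesis by simp
qed

lemma reach44_complement:
  assumes "(S, T) \<in> state_pairs 4 4 - unreachable44"
  shows "({..<4} - S, {..<4} - T) \<in> state_pairs 4 4 - unreachable44"
proof -
  have "enc_pair (S, T) \<in> set codes44" by (simp add: set_codes44 enc_pair_def enc_def)
  then have "blocked44 (enc S, enc T) = blocked44 (map Not (enc S), map Not (enc T))"
    using blocked44_complement by (auto simp: list_all_iff enc_pair_def)
  then show ?thesis using assms by (auto simp: unreachable44_def enc_pair_def enc_complement)
qed

theorem sc_4_4: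
  defines "K \<equiv> reversal (U 4 La Lb Lc)" and "L \<equiv> reversal (U 4 Lb La Lc)"
  shows "sc (K \<union> L) = 202 \<and> sc (K \<inter> L) = 202 \<and> sc (K - L) = 202 \<and> sc (symdiff K L) = 116"
proof -
  let ?R = "state_pairs 4 4 - unreachable44"
  have sc: "sc {w. op (w \<in> K) (w \<in> L)} = card (pair_set 4 4 op ` ?R)" for op
    using sc_bool_comb[of 4 4 La Lb Lc op] connected_4_4 reach_pairs_4_4 unfolding K_def L_def by simp
  have fin: "finite {..<4::nat}" by simp
  have ends: "({}, {}) \<in> ?R" "({..<4}, {..<4}) \<in> ?R"
    by (auto dest: unreachable44_sides)
  have "card (pair_set 4 4 (\<or>) ` ?R) = 202"
    using card_pair_sets_or[of ?R 4 4] ends(2) card_reach44_avoiding[of "{..<4}" "{..<4}"] by simp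
  moreover have "card (pair_set 4 4 (\<and>) ` ?R) = 202"
    using card_pair_sets_and[of ?R 4 4] ends(1) card_reach44_avoiding[of "{}" "{}"] by simp
  moreover have "card (pair_set 4 4 (\<lambda>x y. x \<and> \<not> y) ` ?R) = 202"
    using card_pair_sets_diff[of ?R 4 4] ends(1) card_reach44_avoiding[of "{}" "{..<4}"] by simp
  moreover have "card (pair_set 4 4 (\<noteq>) ` ?R) = 116"
  proof -
    have "?R \<inter> {x. 0 \<in> fst x} = state_pairs 4 4 \<inter> {x. 0 \<in> fst x} - unreachable44 \<inter> {x. 0 \<in> fst x}"
      by auto
    moreover have "unreachable44 \<inter> {x. 0 \<in> fst x} \<subseteq> state_pairs 4 4 \<inter> {x. 0 \<in> fst x}"
      by (auto simp: unreachable44_def)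
    ultimately have "card (?R \<inter> {x. 0 \<in> fst x}) = 128 - 12"
      using card_pairs_containing[OF fin fin, of 0] card_unreachable44_containing_0
        finite_unreachable44 by (simp add: card_Diff_subset)
    then show ?thesis using card_pair_sets_xor[of ?R 4 4, OF _ reach44_complement] by simp
  qed
  ultimately show ?thesis
    unfolding set_ops_as_bool_combs
    using sc[of "(\<or>)"] sc[of "(\<and>)"] sc[of "\<lambda>x y. x \<and> \<not> y"] sc[of "(\<noteq>)"] by simp
qed

theorem lemma1:
  fixes m n :: nat
  assumes "m \<ge> 3" and "n \<ge> 3"
  shows "let K = reversal (U m La Lb Lc); L = reversal (U n Lb La Lc) in
    ((m, n) \<noteq> (4, 4) \<longrightarrow>
       sc (K \<union> L) = (2^m - 1) * (2^n - 1) + 1 \<and>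
       sc (K \<inter> L) = (2^m - 1) * (2^n - 1) + 1 \<and>
       sc (K - L) = (2^m - 1) * (2^n - 1) + 1 \<and>
       sc (symdiff K L) = 2^(m + n - 1)) \<and>
    ((m, n) = (4, 4) \<longrightarrow>
       sc (K \<union> L) = 202 \<and> sc (K \<inter> L) = 202 \<and> sc (K - L) = 202 \<and>
       sc (symdiff K L) = 116)"
  using sc_not_4_4[OF assms] sc_4_4 by (auto simp: Let_def)

end
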